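(* Let $n\ge 2$ and $y=(y_1,\dots,y_{n-1},q)\in\mathbb C^n$. The following are equivalent ("for all $j$" means for all $j=1,\dots,[n/2]$): (1) $y\in\widetilde\Gamma_n$; (2) $\binom{n}{j}-y_jz-y_{n-j}w+\binom{n}{j}qzw\neq 0$ for all $z,w\in\mathbb D$ and all $j$; (3) for all $j$: $\|\Phi_j(\cdot,y)\|_{H^\infty}\le 1$, and if $y_jy_{n-j}=\binom{n}{j}^2q$ then in addition $|y_{n-j}|\le\binom{n}{j}$; (3') for all $j$: $\|\Phi_{n-j}(\cdot,y)\|_{H^\infty}\le 1$, and if $y_jy_{n-j}=\binom{n}{j}^2q$ then in addition $|y_j|\le\binom{n}{j}$; (4) for all $j$: $\binom{n}{j}|y_j-\bar y_{n-j}q|+|y_jy_{n-j}-\binom{n}{j}^2q|\le\binom{n}{j}^2-|y_{n-j}|^2$, and if $y_jy_{n-j}=\binom{n}{j}^2q$ then in addition $|y_j|\le\binom{n}{j}$; (4') for all $j$: $\binom{n}{j}|y_{n-j}-\bar y_{j}q|+|y_jy_{n-j}-\binom{n}{j}^2q|\le\binom{n}{j}^2-|y_{j}|^2$, and if $y_jy_{n-j}=\binom{n}{j}^2q$ then in addition $|y_{n-j}|\le\binom{n}{j}$; (5) for all $j$: $|y_j|^2-|y_{n-j}|^2+\binom{n}{j}^2|q|^2+2\binom{n}{j}|y_{n-j}-\bar y_jq|\le\binom{n}{j}^2$ and $|y_{n-j}|\le\binom{n}{j}$; (5') for all $j$: $|y_{n-j}|^2-|y_{j}|^2+\binom{n}{j}^2|q|^2+2\binom{n}{j}|y_{j}-\bar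 y_{n-j}q|\le\binom{n}{j}^2$ and $|y_{j}|\le\binom{n}{j}$; (6) $|q|\le 1$ and $|y_j|^2+|y_{n-j}|^2-\binom{n}{j}^2|q|^2+2|y_jy_{n-j}-\binom{n}{j}^2q|\le\binom{n}{j}^2$ for all $j$; (7) $|y_{n-j}-\bar y_jq|+|y_j-\bar y_{n-j}q|\le\binom{n}{j}(1-|q|^2)$ for all $j$, and if $|q|=1$ then in addition $|y_j|\le\binom{n}{j}$ for all $j$; (8) there exist $2\times2$ matrices $B_1,\dots,B_{[n/2]}$ with $\|B_j\|\le 1$, $y_j=\binom{n}{j}[B_j]_{11}$, $y_{n-j}=\binom{n}{j}[B_j]_{22}$ for all $j$, and $\det B_1=\dots=\det B_{[n/2]}=q$; (9) the same as (8) with the $B_j$ additionally symmetric; (10) $|q|\le1$ and there exists $(\beta_1,\dots,\beta_{n-1})\in\mathbb C^{n-1}$ with $y_j=\beta_j+\bar\beta_{n-j}q$, $y_{n-j}=\beta_{n-j}+\bar\beta_jq$ and $|\beta_j|+|\beta_{n-j}|\le\binom{n}{j}$ for all $j$.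
   Context: $\mathbb D$ is the open unit disc, $[x]$ the integer part, $\|\cdot\|$ the operator norm. $\widetilde{\mathbb G}_n=\{(y_1,\dots,y_{n-1},q)\in\mathbb C^n: q\in\mathbb D,\ y_j=\beta_j+\bar\beta_{n-j}q$ for some $\beta_j\in\mathbb C$ with $|\beta_j|+|\beta_{n-j}|<\binom{n}{j}$, $j=1,\dots,n-1\}$, and $\widetilde\Gamma_n$ denotes its closure in $\mathbb C^n$. For $z\in\mathbb C$, $y=(y_1,\dots,y_{n-1},q)$ and $j\in\{1,\dots,n-1\}$: $\Phi_j(z,y)=\dfrac{\binom{n}{j}qz-y_j}{y_{n-j}z-\binom{n}{j}}$ if $y_{n-j}z\ne\binom{n}{j}$ and $y_jy_{n-j}\neq\binom{n}{j}^2q$, and $\Phi_j(z,y)=y_j/\binom{n}{j}$ if $y_jy_{n-j}=\binom{n}{j}^2q$; $\|\Phi_j(\cdot,y)\|_{H^\infty}=\sup_{z\in\mathbb D}|\Phi_j(z,y)|$, understood as $+\infty$ if $\Phi_j(\cdot,y)$ is undefined somewhere on $\mathbb D$ or unbounded there. *)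

theory Defs
  imports "HOL-Analysis.Analysis"
begin

text \<open>Points of C^n are represented as pairs (y, q) with y :: nat => complex, where only
the coordinates y 1, ..., y (n-1) are relevant, and q :: complex the last coordinate.
The topology is the product topology on (nat => complex) x complex; the set below is a
cylinder (no constraint on coordinates outside 1..n-1), so closure acts as closure in C^n.\<close>

definition Gtilde :: "nat \<Rightarrow> ((nat \<Rightarrow> complex) \<times> complex) set" where
  "Gtilde n = {(y, q). q \<in> ball 0 1 \<and>
     (\<exists>\<beta> :: nat \<Rightarrow> complex. \<forall>j\<in>{1..n-1}.
        y j = \<beta> j + cnj (\<beta> (n - j)) * q \<and>
        cmod (\<beta> j) + cmod (\<beta> (n - j)) < real (n choose j))}"

definition Gammatilde :: "nat \<Rightarrow> ((nat \<Rightarrow> complex) \<times> complex) set" where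
  "Gammatilde n = closure (Gtilde n)"

definition Phi :: "nat \<Rightarrow> nat \<Rightarrow> (nat \<Rightarrow> complex) \<Rightarrow> complex \<Rightarrow> complex \<Rightarrow> complex option" where
  "Phi n j y q z =
     (let c = of_nat (n choose j) :: complex in
      if y j * y (n - j) = c ^ 2 * q then Some (y j / c)
      else if y (n - j) * z \<noteq> c then Some ((c * q * z - y j) / (y (n - j) * z - c))
      else None)"

definition Phi_Hinf :: "nat \<Rightarrow> nat \<Rightarrow> (nat \<Rightarrow> complex) \<Rightarrow> complex \<Rightarrow> ereal" where
  "Phi_Hinf n j y q =
     (if \<forall>z\<in>ball 0 1. Phi n j y q z \<noteq> None
      then (SUP z\<in>ball 0 1. ereal (cmod (the (Phi n j y q z))))
      else \<infinity>)"

end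

theory Submission
  imports Defs
begin

(* For each j the conditions involve only the triple (y j, y (n - j), q).  After dividing y j and
   y (n - j) by (n choose j), each becomes a known characterisation of the closed tetrablock of
   Abouhajar, White and Young,
     |a - cnj b p| + |b - cnj a p| <= 1 - |p|^2,   |a| <= 1,   |b| <= 1.
   For one triple the conditions are proved equivalent along the cycle
     closed tetrablock -> beta-representation (10) -> (6) -> symmetric contraction (9)
       -> contraction (8) -> no zeros in the bidisc (2) -> Moebius bound (3) -> (5)
       -> closed tetrablock,
   together with (4) <-> (6) and (7) <-> closed tetrablock.  Finally, Gammatilde n is the set of
   points whose normalised triples all lie in the closed tetrablock: this set is closed, contains
   Gtilde n, and is approximated from inside Gtilde n by dilating beta-representations. *)

section \<open>The closed tetrablock\<close>

lemma of_real_cmod_power2: "(complex_of_real (cmod z))^2 = z * cnj z"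
  by (metis complex_norm_square of_real_power)

lemmas complex_poly_expand =
  of_real_diff of_real_mult of_real_power of_real_add of_real_numeral of_real_1 of_real_cmod_power2
  complex_cnj_add complex_cnj_mult complex_cnj_cnj complex_cnj_diff complex_cnj_one complex_cnj_power

text \<open>Lemmas named \<open>closed_tetrablock_iff_condK\<close> and \<open>scaled_condK_iff\<close> refer to condition (K)
  of the theorem for a single index \<open>j\<close>, with \<open>(y j, y (n - j))\<close> normalised to \<open>(a, b)\<close>, resp.
  scaled by \<open>C\<close>.\<close>
definition closed_tetrablock :: "complex \<Rightarrow> complex \<Rightarrow> complex \<Rightarrow> bool" where
  "closed_tetrablock a b p \<longleftrightarrow> cmod p \<le> 1 \<and>
     cmod (a - cnj b * p) + cmod (b - cnj a * p) \<le> 1 - (cmod p)^2 \<and> cmod a \<le> 1 \<and> cmod b \<le> 1"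

lemma closed_tetrablock_commute: "closed_tetrablock a b p \<longleftrightarrow> closed_tetrablock b a p"
  unfolding closed_tetrablock_def by auto

lemma tetrablock_defect_identity:
  "a * of_real (1 - (cmod p)^2) = (a - cnj b * p) + cnj (b - cnj a * p) * p"
  unfolding complex_poly_expand by (simp add: algebra_simps)

lemma closed_tetrablock_iff_cond7:
  "closed_tetrablock a b p \<longleftrightarrow>
     cmod (a - cnj b * p) + cmod (b - cnj a * p) \<le> 1 - (cmod p)^2 \<and> (cmod p = 1 \<longrightarrow> cmod a \<le> 1)"
proof
  assume bound: "cmod (a - cnj b * p) + cmod (b - cnj a * p) \<le> 1 - (cmod p)^2 \<and> (cmod p = 1 \<longrightarrow> cmod a \<le> 1)"
  then have "(cmod p)^2 \<le> 1" by (smt (verit) norm_ge_zero)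
  then have p: "cmod p \<le> 1" by (simp add: abs_square_le_1)
  have "cmod a \<le> 1 \<and> cmod b \<le> 1"
  proof (cases "cmod p = 1")
    case True
    then have "cmod (a - cnj b * p) + cmod (b - cnj a * p) \<le> 0" using bound by simp
    then have "cmod (b - cnj a * p) = 0"
      using norm_ge_zero[of "a - cnj b * p"] norm_ge_zero[of "b - cnj a * p"] by linarith
    then have "cmod b = cmod a" using True by (simp add: norm_mult)
    then show ?thesis using bound True by simp
  next
    case False
    then have D: "1 - (cmod p)^2 > 0" using p by (simp add: abs_square_less_1)
    have "cmod x * (1 - (cmod p)^2) \<le> 1 - (cmod p)^2" if "x = a \<and> x' = b \<or> x = b \<and> x' = a" for x x'
    proof -
      have "cmod x * (1 - (cmod p)^2) = cmod ((x - cnj x' * p) + cnj (x' - cnj x * p) * p)"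
        using D by (metis abs_of_pos norm_mult norm_of_real tetrablock_defect_identity)
      also have "\<dots> \<le> cmod (x - cnj x' * p) + cmod (x' - cnj x * p) * cmod p"
        by (metis complex_mod_cnj norm_mult norm_triangle_ineq)
      also have "\<dots> \<le> cmod (x - cnj x' * p) + cmod (x' - cnj x * p)"
        using p by (simp add: mult_left_le)
      also have "\<dots> \<le> 1 - (cmod p)^2" using bound that by auto
      finally show ?thesis .
    qed
    then show ?thesis using D by (metis mult_le_cancel_right2)
  qed
  then show "closed_tetrablock a b p" unfolding closed_tetrablock_def using bound p by simp
qed (simp add: closed_tetrablock_def)

text \<open>When \<open>cmod p = 1\<close> a point of the closed tetrablock satisfies \<open>a = cnj b * p\<close>, so that
  \<open>a/2\<close>, \<open>b/2\<close> is a valid splitting.\<close>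
definition tetrablock_beta :: "complex \<Rightarrow> complex \<Rightarrow> complex \<Rightarrow> complex" where
  "tetrablock_beta a b p =
     (if cmod p < 1 then (a - cnj b * p) / of_real (1 - (cmod p)^2) else a / 2)"

lemma closed_tetrablock_beta_repr:
  assumes "closed_tetrablock a b p"
  shows "a = tetrablock_beta a b p + cnj (tetrablock_beta b a p) * p"
    and "cmod (tetrablock_beta a b p) + cmod (tetrablock_beta b a p) \<le> 1"
proof -
  have bound: "cmod (a - cnj b * p) + cmod (b - cnj a * p) \<le> 1 - (cmod p)^2"
    using assms unfolding closed_tetrablock_def by simp
  have "a = tetrablock_beta a b p + cnj (tetrablock_beta b a p) * p \<and>
      cmod (tetrablock_beta a b p) + cmod (tetrablock_beta b a p) \<le> 1"
  proof (cases "cmod p < 1")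
    case True
    define D where "D = 1 - (cmod p)^2"
    have D: "D > 0" using True unfolding D_def by (simp add: abs_square_less_1)
    have "(tetrablock_beta a b p + cnj (tetrablock_beta b a p) * p) * of_real D
        = (a - cnj b * p) + cnj (b - cnj a * p) * p"
      using True D by (simp add: tetrablock_beta_def D_def[symmetric] field_simps)
    also have "\<dots> = a * of_real D" unfolding D_def by (rule tetrablock_defect_identity[symmetric])
    finally have "a = tetrablock_beta a b p + cnj (tetrablock_beta b a p) * p" using D by simp
    moreover have "cmod (tetrablock_beta a b p) + cmod (tetrablock_beta b a p)
        = (cmod (a - cnj b * p) + cmod (b - cnj a * p)) / D"
      using True D by (simp add: tetrablock_beta_def D_def[symmetric] norm_divide add_divide_distrib)
    moreover have "\<dots> \<le> 1" using bound D unfolding D_def by simp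
    ultimately show ?thesis by simp
  next
    case False
    then have "cmod p = 1" using assms unfolding closed_tetrablock_def by simp
    then have "cmod (a - cnj b * p) + cmod (b - cnj a * p) \<le> 0" using bound by simp
    then have "cmod (a - cnj b * p) = 0"
      using norm_ge_zero[of "a - cnj b * p"] norm_ge_zero[of "b - cnj a * p"] by linarith
    then have "a = cnj b * p" by simp
    moreover have "cmod a + cmod b \<le> 2" using assms unfolding closed_tetrablock_def by simp
    ultimately show ?thesis using False by (simp add: tetrablock_beta_def norm_divide)
  qed
  then show "a = tetrablock_beta a b p + cnj (tetrablock_beta b a p) * p"
    and "cmod (tetrablock_beta a b p) + cmod (tetrablock_beta b a p) \<le> 1" by simp_all
qed

lemma beta_repr_imp_closed_tetrablock:
  assumes a: "a = \<beta>\<^sub>1 + cnj \<beta>\<^sub>2 * p" and b: "b = \<beta>\<^sub>2 + cnj \<beta>\<^sub>1 * p"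
    and \<beta>: "cmod \<beta>\<^sub>1 + cmod \<beta>\<^sub>2 \<le> 1" and p: "cmod p \<le> 1"
  shows "closed_tetrablock a b p"
proof -
  have D: "0 \<le> 1 - (cmod p)^2" using p by (simp add: abs_square_le_1)
  have "a - cnj b * p = \<beta>\<^sub>1 * of_real (1 - (cmod p)^2)"
    "b - cnj a * p = \<beta>\<^sub>2 * of_real (1 - (cmod p)^2)"
    unfolding a b complex_poly_expand by (simp_all add: algebra_simps)
  then have "cmod (a - cnj b * p) = cmod \<beta>\<^sub>1 * (1 - (cmod p)^2)"
    "cmod (b - cnj a * p) = cmod \<beta>\<^sub>2 * (1 - (cmod p)^2)"
    using D by (metis abs_of_nonneg norm_mult norm_of_real)+
  then have "cmod (a - cnj b * p) + cmod (b - cnj a * p) = (cmod \<beta>\<^sub>1 + cmod \<beta>\<^sub>2) * (1 - (cmod p)^2)"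
    by (simp add: algebra_simps)
  also have "\<dots> \<le> 1 - (cmod p)^2" using \<beta> D by (simp add: mult_left_le_one_le)
  finally have "cmod (a - cnj b * p) + cmod (b - cnj a * p) \<le> 1 - (cmod p)^2" .
  moreover have "cmod p = 1 \<longrightarrow> cmod a \<le> 1"
  proof -
    have "cmod a \<le> cmod \<beta>\<^sub>1 + cmod \<beta>\<^sub>2 * cmod p"
      unfolding a by (metis complex_mod_cnj norm_mult norm_triangle_ineq)
    then show ?thesis using \<beta> by auto
  qed
  ultimately show ?thesis unfolding closed_tetrablock_iff_cond7 by blast
qed

section \<open>Characterisations of the closed tetrablock\<close>

lemma beta_repr_cond6_identities:
  assumes a: "a = \<beta>\<^sub>1 + cnj \<beta>\<^sub>2 * p" and b: "b = \<beta>\<^sub>2 + cnj \<beta>\<^sub>1 * p"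
  defines "S \<equiv> 1 - (cmod a)^2 - (cmod b)^2 + (cmod p)^2"
  shows "S^2 - 4 * (cmod (a * b - p))^2
      = (1 - (cmod p)^2)^2 * ((1 - (cmod \<beta>\<^sub>1)^2 - (cmod \<beta>\<^sub>2)^2)^2 - 4 * (cmod \<beta>\<^sub>1)^2 * (cmod \<beta>\<^sub>2)^2)"
    and "S = (1 + (cmod p)^2) * (1 - (cmod \<beta>\<^sub>1)^2 - (cmod \<beta>\<^sub>2)^2) - 4 * Re (\<beta>\<^sub>1 * \<beta>\<^sub>2 * cnj p)"
proof -
  have "complex_of_real (S^2 - 4 * (cmod (a * b - p))^2) = complex_of_real
      ((1 - (cmod p)^2)^2 * ((1 - (cmod \<beta>\<^sub>1)^2 - (cmod \<beta>\<^sub>2)^2)^2 - 4 * (cmod \<beta>\<^sub>1)^2 * (cmod \<beta>\<^sub>2)^2))"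
    unfolding S_def complex_poly_expand a b by algebra
  then show "S^2 - 4 * (cmod (a * b - p))^2
      = (1 - (cmod p)^2)^2 * ((1 - (cmod \<beta>\<^sub>1)^2 - (cmod \<beta>\<^sub>2)^2)^2 - 4 * (cmod \<beta>\<^sub>1)^2 * (cmod \<beta>\<^sub>2)^2)"
    by (simp only: of_real_eq_iff)
  have "complex_of_real S = complex_of_real ((1 + (cmod p)^2) * (1 - (cmod \<beta>\<^sub>1)^2 - (cmod \<beta>\<^sub>2)^2))
      - 2 * ((\<beta>\<^sub>1 * \<beta>\<^sub>2 * cnj p) + cnj (\<beta>\<^sub>1 * \<beta>\<^sub>2 * cnj p))"
    unfolding S_def complex_poly_expand a b by algebra
  also have "\<dots> = complex_of_real ((1 + (cmod p)^2) * (1 - (cmod \<beta>\<^sub>1)^2 - (cmod \<beta>\<^sub>2)^2)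
      - 4 * Re (\<beta>\<^sub>1 * \<beta>\<^sub>2 * cnj p))"
    unfolding complex_add_cnj by simp
  finally show "S = (1 + (cmod p)^2) * (1 - (cmod \<beta>\<^sub>1)^2 - (cmod \<beta>\<^sub>2)^2) - 4 * Re (\<beta>\<^sub>1 * \<beta>\<^sub>2 * cnj p)"
    by (simp only: of_real_eq_iff)
qed

lemma beta_repr_imp_cond6:
  assumes a: "a = \<beta>\<^sub>1 + cnj \<beta>\<^sub>2 * p" and b: "b = \<beta>\<^sub>2 + cnj \<beta>\<^sub>1 * p"
    and \<beta>: "cmod \<beta>\<^sub>1 + cmod \<beta>\<^sub>2 \<le> 1" and p: "cmod p \<le> 1"
  shows "(cmod a)^2 + (cmod b)^2 - (cmod p)^2 + 2 * cmod (a * b - p) \<le> 1"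
proof -
  define S where "S = 1 - (cmod a)^2 - (cmod b)^2 + (cmod p)^2"
  define u v t where "u = cmod \<beta>\<^sub>1" and "v = cmod \<beta>\<^sub>2" and "t = cmod p"
  note S = beta_repr_cond6_identities[OF a b, folded S_def u_def v_def t_def]
  have u0: "u \<ge> 0" "v \<ge> 0" "t \<ge> 0" and uv: "u + v \<le> 1" "t \<le> 1"
    using \<beta> p unfolding u_def v_def t_def by auto
  have uv_le: "2 * u * v \<le> 1 - u^2 - v^2"
    using power_le_one[OF add_nonneg_nonneg[OF u0(1,2)] uv(1), of 2]
    by (simp add: power2_eq_square algebra_simps)
  have Re_le: "Re (\<beta>\<^sub>1 * \<beta>\<^sub>2 * cnj p) \<le> u * v * t"
    using complex_Re_le_cmod[of "\<beta>\<^sub>1 * \<beta>\<^sub>2 * cnj p"] unfolding u_def v_def t_def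
    by (simp add: norm_mult)
  have "4 * (u * v * t) = (2 * t) * (2 * u * v)" by simp
  also have "\<dots> \<le> (1 + t^2) * (1 - u^2 - v^2)"
  proof (rule mult_mono)
    show "2 * t \<le> 1 + t^2" using zero_le_power2[of "1 - t"] by (simp add: power2_diff)
  qed (use uv_le u0 in auto)
  finally have S0: "S \<ge> 0" using S(2) Re_le by linarith
  have "(2 * u * v)^2 \<le> (1 - u^2 - v^2)^2"
    using uv_le u0 by (simp add: power_mono)
  then have "0 \<le> (1 - t^2)^2 * ((1 - u^2 - v^2)^2 - 4 * u^2 * v^2)"
    by (simp add: power_mult_distrib)
  then have "(2 * cmod (a * b - p))^2 \<le> S^2"
    using S(1) by (simp add: power_mult_distrib)
  then have "2 * cmod (a * b - p) \<le> S" using S0 by (rule power2_le_imp_le)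
  then show ?thesis unfolding S_def by simp
qed

lemma quadratic_form_bound:
  fixes \<alpha> \<delta> g x y :: real
  assumes "0 \<le> \<alpha>" "0 \<le> \<delta>" "g^2 \<le> \<alpha> * \<delta>"
  shows "2 * g * x * y \<le> \<alpha> * x^2 + \<delta> * y^2"
proof (cases "\<alpha> = 0")
  case True
  then show ?thesis using assms by simp
next
  case False
  have "\<alpha> * (\<alpha> * x^2 + \<delta> * y^2 - 2 * g * x * y) = (\<alpha> * x - g * y)^2 + (\<alpha> * \<delta> - g^2) * y^2"
    by (simp add: power2_eq_square algebra_simps)
  also have "\<dots> \<ge> 0" using assms by simp
  finally show ?thesis using False assms(1) by (simp add: zero_le_mult_iff)
qed

lemma norm_vec2_power2: "(norm (x :: complex^2))^2 = (cmod (x$1))^2 + (cmod (x$2))^2"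
  by (simp add: norm_vec_def L2_set_def sum_2)

lemma matrix_vector_mult_2:
  fixes M :: "complex^2^2"
  shows "(M *v x) $ 1 = M$1$1 * x$1 + M$1$2 * x$2" and "(M *v x) $ 2 = M$2$1 * x$1 + M$2$2 * x$2"
  by (simp_all add: matrix_vector_mult_def sum_2)

text \<open>The Hermitian form \<open>\<bar>x\<bar>\<^sup>2 - \<bar>Bx\<bar>\<^sup>2\<close> of \<open>B = [[a, w], [w, b]]\<close> has diagonal
  \<open>\<alpha>, \<delta>\<close> and off-diagonal \<open>g\<close> below; its determinant is
  \<open>1 - \<bar>a\<bar>\<^sup>2 - \<bar>b\<bar>\<^sup>2 - 2\<bar>w\<bar>\<^sup>2 + \<bar>p\<bar>\<^sup>2\<close>, which is nonnegative by the hypothesis.\<close>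
lemma symmetric_contraction_ineq:
  fixes a b w x\<^sub>1 x\<^sub>2 :: complex
  assumes w: "w^2 = a * b - p" and p: "cmod p \<le> 1"
    and cond6: "(cmod a)^2 + (cmod b)^2 - (cmod p)^2 + 2 * cmod (a * b - p) \<le> 1"
  shows "(cmod (a * x\<^sub>1 + w * x\<^sub>2))^2 + (cmod (w * x\<^sub>1 + b * x\<^sub>2))^2 \<le> (cmod x\<^sub>1)^2 + (cmod x\<^sub>2)^2"
proof -
  define \<alpha> where "\<alpha> = 1 - (cmod a)^2 - (cmod w)^2"
  define \<delta> where "\<delta> = 1 - (cmod b)^2 - (cmod w)^2"
  define g where "g = a * cnj w + w * cnj b"
  have form: "(cmod x\<^sub>1)^2 + (cmod x\<^sub>2)^2 - (cmod (a * x\<^sub>1 + w * x\<^sub>2))^2 - (cmod (w * x\<^sub>1 + b * x\<^sub>2))^2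
      = \<alpha> * (cmod x\<^sub>1)^2 + \<delta> * (cmod x\<^sub>2)^2 - 2 * Re (x\<^sub>1 * cnj x\<^sub>2 * g)"
  proof -
    have "complex_of_real ((cmod x\<^sub>1)^2 + (cmod x\<^sub>2)^2 - (cmod (a * x\<^sub>1 + w * x\<^sub>2))^2
          - (cmod (w * x\<^sub>1 + b * x\<^sub>2))^2)
        = complex_of_real (\<alpha> * (cmod x\<^sub>1)^2 + \<delta> * (cmod x\<^sub>2)^2)
          - ((x\<^sub>1 * cnj x\<^sub>2 * g) + cnj (x\<^sub>1 * cnj x\<^sub>2 * g))"
      unfolding \<alpha>_def \<delta>_def g_def complex_poly_expand by algebra
    also have "\<dots> = complex_of_real (\<alpha> * (cmod x\<^sub>1)^2 + \<delta> * (cmod x\<^sub>2)^2 - 2 * Re (x\<^sub>1 * cnj x\<^sub>2 * g))"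
      unfolding complex_add_cnj by simp
    finally show ?thesis by (simp only: of_real_eq_iff)
  qed
  have p_eq: "p = a * b - w^2" using w by simp
  have det: "\<alpha> * \<delta> - (cmod g)^2 = 1 - (cmod a)^2 - (cmod b)^2 - 2 * (cmod w)^2 + (cmod p)^2"
  proof -
    have "complex_of_real (\<alpha> * \<delta> - (cmod g)^2)
        = complex_of_real (1 - (cmod a)^2 - (cmod b)^2 - 2 * (cmod w)^2 + (cmod p)^2)"
      unfolding \<alpha>_def \<delta>_def g_def complex_poly_expand p_eq by algebra
    then show ?thesis by (simp only: of_real_eq_iff)
  qed
  have w_norm: "(cmod w)^2 = cmod (a * b - p)" by (simp add: w[symmetric] norm_power)
  have "(cmod p)^2 \<le> 1" using p by (simp add: abs_square_le_1)
  then have g: "(cmod g)^2 \<le> \<alpha> * \<delta>" and "\<alpha> + \<delta> \<ge> 0"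
    using det cond6 w_norm unfolding \<alpha>_def \<delta>_def by linarith+
  moreover have "\<alpha> * \<delta> \<ge> 0" using g zero_le_power2[of "cmod g"] by linarith
  ultimately have \<alpha>\<delta>: "\<alpha> \<ge> 0" "\<delta> \<ge> 0" by (auto simp: zero_le_mult_iff)
  have "Re (x\<^sub>1 * cnj x\<^sub>2 * g) \<le> cmod (x\<^sub>1 * cnj x\<^sub>2 * g)" by (rule complex_Re_le_cmod)
  also have "\<dots> = cmod g * cmod x\<^sub>1 * cmod x\<^sub>2" by (simp add: norm_mult)
  finally have "2 * Re (x\<^sub>1 * cnj x\<^sub>2 * g) \<le> 2 * cmod g * cmod x\<^sub>1 * cmod x\<^sub>2" by linarith
  also have "\<dots> \<le> \<alpha> * (cmod x\<^sub>1)^2 + \<delta> * (cmod x\<^sub>2)^2"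
    by (rule quadratic_form_bound[OF \<alpha>\<delta> g])
  finally have "0 \<le> (cmod x\<^sub>1)^2 + (cmod x\<^sub>2)^2 - (cmod (a * x\<^sub>1 + w * x\<^sub>2))^2
      - (cmod (w * x\<^sub>1 + b * x\<^sub>2))^2"
    unfolding form by simp
  then show ?thesis by simp
qed

lemma cond6_imp_symmetric_contraction:
  assumes p: "cmod p \<le> 1" and cond6: "(cmod a)^2 + (cmod b)^2 - (cmod p)^2 + 2 * cmod (a * b - p) \<le> 1"
  shows "\<exists>B :: complex^2^2. onorm (\<lambda>x. B *v x) \<le> 1 \<and> transpose B = B \<and>
           B$1$1 = a \<and> B$2$2 = b \<and> det B = p"
proof -
  define w where "w = csqrt (a * b - p)"
  have w: "w^2 = a * b - p" unfolding w_def by simp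
  define B where "B = (vector [vector [a, w], vector [w, b]] :: complex^2^2)"
  have B: "B$1$1 = a" "B$1$2 = w" "B$2$1 = w" "B$2$2 = b" unfolding B_def by simp_all
  have "onorm (\<lambda>x. B *v x) \<le> 1"
  proof (rule onorm_le)
    fix x :: "complex^2"
    have "(norm (B *v x))^2 \<le> (norm x)^2"
      unfolding norm_vec2_power2 matrix_vector_mult_2 B
      using symmetric_contraction_ineq[OF w p cond6] by simp
    then show "norm (B *v x) \<le> 1 * norm x" using power2_le_imp_le[of "norm (B *v x)" "norm x"] by simp
  qed
  moreover have "transpose B = B" unfolding transpose_def vec_eq_iff forall_2 using B by simp
  moreover have "det B = p" unfolding det_2 B using w by (simp add: power2_eq_square)
  ultimately show ?thesis using B by blast
qed

lemma contraction_2x2_ineq: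
  fixes B :: "complex^2^2"
  assumes "onorm (\<lambda>x. B *v x) \<le> 1"
  shows "(cmod (B$1$1 * v\<^sub>1 + B$1$2 * v\<^sub>2))^2 + (cmod (B$2$1 * v\<^sub>1 + B$2$2 * v\<^sub>2))^2
      \<le> (cmod v\<^sub>1)^2 + (cmod v\<^sub>2)^2"
proof -
  let ?v = "vector [v\<^sub>1, v\<^sub>2] :: complex^2"
  have "norm (B *v ?v) \<le> onorm (\<lambda>x. B *v x) * norm ?v" by (rule onorm) simp
  also have "\<dots> \<le> 1 * norm ?v" using assms by (intro mult_right_mono) auto
  finally have "(norm (B *v ?v))^2 \<le> (norm ?v)^2" by (simp add: power_mono)
  then show ?thesis unfolding norm_vec2_power2 matrix_vector_mult_2 by simp
qed

text \<open>If the expression vanished, \<open>B\<close> would map \<open>(z u\<^sub>1, w u\<^sub>2)\<close> to \<open>(u\<^sub>1, u\<^sub>2)\<close>, a vector of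
  strictly larger norm.\<close>
lemma contraction_nonvanishing:
  fixes B :: "complex^2^2"
  assumes B: "onorm (\<lambda>x. B *v x) \<le> 1" and z: "cmod z < 1" and w: "cmod w < 1"
  shows "1 - B$1$1 * z - B$2$2 * w + det B * z * w \<noteq> 0"
proof
  assume zero: "1 - B$1$1 * z - B$2$2 * w + det B * z * w = 0"
  have "(cmod (B$1$1))^2 + (cmod (B$2$1))^2 \<le> 1" using contraction_2x2_ineq[OF B, of 1 0] by simp
  then have "(cmod (B$1$1))^2 \<le> 1" using zero_le_power2[of "cmod (B$2$1)"] by linarith
  then have "cmod (B$1$1) \<le> 1" by (simp add: abs_square_le_1)
  then have "cmod (B$1$1) * cmod z \<le> cmod z" by (simp add: mult_left_le_one_le)
  then have "cmod (B$1$1 * z) < 1" using z by (simp add: norm_mult)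
  define u\<^sub>1 where "u\<^sub>1 = B$1$2 * w"
  define u\<^sub>2 where "u\<^sub>2 = 1 - B$1$1 * z"
  have u\<^sub>2: "u\<^sub>2 \<noteq> 0" using \<open>cmod (B$1$1 * z) < 1\<close> unfolding u\<^sub>2_def by auto
  have "B$1$1 * (z * u\<^sub>1) + B$1$2 * (w * u\<^sub>2) = u\<^sub>1"
    unfolding u\<^sub>1_def u\<^sub>2_def by (simp add: algebra_simps)
  moreover have "B$2$1 * (z * u\<^sub>1) + B$2$2 * (w * u\<^sub>2) = u\<^sub>2"
  proof -
    have "u\<^sub>2 = w * (B$2$2 - det B * z)" using zero unfolding u\<^sub>2_def by (simp add: algebra_simps)
    moreover have "B$2$1 * (z * u\<^sub>1) + B$2$2 * (w * u\<^sub>2) = w * (B$2$2 - det B * z)"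
      unfolding u\<^sub>1_def u\<^sub>2_def det_2 by (simp add: algebra_simps)
    ultimately show ?thesis by simp
  qed
  ultimately have "(cmod u\<^sub>1)^2 + (cmod u\<^sub>2)^2 \<le> (cmod (z * u\<^sub>1))^2 + (cmod (w * u\<^sub>2))^2"
    using contraction_2x2_ineq[OF B, of "z * u\<^sub>1" "w * u\<^sub>2"] by simp
  moreover have "(cmod (z * u\<^sub>1))^2 \<le> (cmod u\<^sub>1)^2"
    unfolding norm_mult power_mult_distrib using z by (simp add: mult_left_le_one_le power_le_one)
  moreover have "(cmod (w * u\<^sub>2))^2 < (cmod u\<^sub>2)^2"
    unfolding norm_mult power_mult_distrib using w u\<^sub>2 by (simp add: abs_square_less_1)
  ultimately show False by linarith
qed

lemma ball_mult_ne_1_iff: "(\<forall>w\<in>ball 0 1. b * w \<noteq> 1) \<longleftrightarrow> cmod b \<le> 1"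
proof
  assume "\<forall>w\<in>ball 0 1. b * w \<noteq> 1"
  then show "cmod b \<le> 1"
  proof (rule contrapos_pp)
    assume "\<not> cmod b \<le> 1"
    then have "cmod (1 / b) < 1" "b \<noteq> 0" by (auto simp: norm_divide divide_less_eq)
    moreover have "b * (1 / b) = 1" using \<open>b \<noteq> 0\<close> by simp
    ultimately show "\<not> (\<forall>w\<in>ball 0 1. b * w \<noteq> 1)" by (metis mem_ball_0)
  qed
next
  assume b: "cmod b \<le> 1"
  have "cmod (b * w) < 1" if "cmod w < 1" for w
  proof -
    have "cmod b * cmod w \<le> cmod w" using b by (simp add: mult_left_le_one_le)
    then show ?thesis using that by (simp add: norm_mult)
  qed
  then show "\<forall>w\<in>ball 0 1. b * w \<noteq> 1" by fastforce
qed

lemma nonvanishing_iff_moebius_bound: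
  "(\<forall>z\<in>ball 0 1. \<forall>w\<in>ball 0 1. 1 - a * z - b * w + p * z * w \<noteq> 0) \<longleftrightarrow>
   (\<forall>w\<in>ball 0 1. b * w \<noteq> 1 \<and> cmod (p * w - a) \<le> cmod (b * w - 1))"
proof -
  have affine: "1 - a * z - b * w + p * z * w = (1 - b * w) - z * (a - p * w)" for z w
    by (simp add: algebra_simps)
  have "(\<forall>z\<in>ball 0 1. (1 - b * w) - z * (a - p * w) \<noteq> 0) \<longleftrightarrow>
      b * w \<noteq> 1 \<and> cmod (p * w - a) \<le> cmod (b * w - 1)" for w
  proof
    assume nz: "\<forall>z\<in>ball 0 1. (1 - b * w) - z * (a - p * w) \<noteq> 0"
    then have bw: "b * w \<noteq> 1" using centre_in_ball[of 0 1] by force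
    have "cmod (p * w - a) \<le> cmod (b * w - 1)"
    proof (rule ccontr)
      assume "\<not> ?thesis"
      then have lt: "cmod (b * w - 1) < cmod (p * w - a)" by simp
      define z where "z = (1 - b * w) / (a - p * w)"
      have "a - p * w \<noteq> 0" using lt by auto
      then have "(1 - b * w) - z * (a - p * w) = 0" unfolding z_def by simp
      moreover have "z \<in> ball 0 1"
        using lt unfolding z_def by (simp add: norm_divide divide_less_eq norm_minus_commute)
      ultimately show False using nz by blast
    qed
    then show "b * w \<noteq> 1 \<and> cmod (p * w - a) \<le> cmod (b * w - 1)" using bw by simp
  next
    assume bound: "b * w \<noteq> 1 \<and> cmod (p * w - a) \<le> cmod (b * w - 1)"
    show "\<forall>z\<in>ball 0 1. (1 - b * w) - z * (a - p * w) \<noteq> 0"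
    proof
      fix z :: complex assume z: "z \<in> ball 0 1"
      have "cmod (z * (a - p * w)) \<le> cmod z * cmod (b * w - 1)"
        using bound by (simp add: norm_mult norm_minus_commute mult_left_mono)
      also have "\<dots> < cmod (1 - b * w)"
        using z bound by (simp add: norm_minus_commute)
      finally show "(1 - b * w) - z * (a - p * w) \<noteq> 0" by auto
    qed
  qed
  then show ?thesis unfolding affine by blast
qed

lemma quadratic_nonneg_at_1:
  fixes c\<^sub>0 c\<^sub>1 c\<^sub>2 :: real
  assumes "\<And>r. 0 \<le> r \<Longrightarrow> r < 1 \<Longrightarrow> 0 \<le> c\<^sub>0 + c\<^sub>1 * r + c\<^sub>2 * r^2"
  shows "0 \<le> c\<^sub>0 + c\<^sub>1 + c\<^sub>2"
proof -
  have "((\<lambda>r. c\<^sub>0 + c\<^sub>1 * r + c\<^sub>2 * r^2) \<longlongrightarrow> c\<^sub>0 + c\<^sub>1 * 1 + c\<^sub>2 * 1^2) (at_left (1::real))"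
    by (intro tendsto_intros)
  moreover have "eventually (\<lambda>r. 0 \<le> c\<^sub>0 + c\<^sub>1 * r + c\<^sub>2 * r^2) (at_left (1::real))"
    unfolding eventually_at_left[of 0 "1::real", simplified] using assms by (intro exI[of _ 0]) auto
  ultimately have "0 \<le> c\<^sub>0 + c\<^sub>1 * 1 + c\<^sub>2 * 1^2" by (intro tendsto_lowerbound) auto
  then show ?thesis by simp
qed

text \<open>Evaluate the bound at \<open>w = r \<zeta>\<close>, where the unimodular \<open>\<zeta>\<close> makes \<open>\<zeta> (b - p cnj a)\<close> real and
  nonnegative, and let \<open>r \<rightarrow> 1\<close>.\<close>
lemma moebius_bound_imp_cond5:
  assumes bound: "\<forall>w\<in>ball 0 1. b * w \<noteq> 1 \<and> cmod (p * w - a) \<le> cmod (b * w - 1)"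
  shows "(cmod a)^2 - (cmod b)^2 + (cmod p)^2 + 2 * cmod (b - cnj a * p) \<le> 1 \<and> cmod b \<le> 1"
proof -
  define d where "d = b - p * cnj a"
  define \<zeta> where "\<zeta> = (if d = 0 then 1 else cnj d / of_real (cmod d))"
  have "\<zeta> * d = of_real (cmod d)"
  proof (cases "d = 0")
    case False
    have "cnj d * d = of_real (cmod d) * of_real (cmod d)"
      by (simp add: mult.commute of_real_cmod_power2[symmetric] power2_eq_square)
    then show ?thesis using False unfolding \<zeta>_def by simp
  qed (simp add: \<zeta>_def)
  moreover have "cmod \<zeta> = 1" unfolding \<zeta>_def by (simp add: norm_divide)
  ultimately have \<zeta>: "cmod \<zeta> = 1" "\<zeta> * d = of_real (cmod d)" by simp_all
  have "0 \<le> (1 - (cmod a)^2) + (- 2 * cmod d) * r + ((cmod b)^2 - (cmod p)^2) * r^2"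
    if r: "0 \<le> r" "r < 1" for r :: real
  proof -
    define w where "w = of_real r * \<zeta>"
    have wd: "w * d = of_real (r * cmod d)" unfolding w_def using \<zeta>(2) by (simp add: mult.assoc)
    have w: "cmod w = r" "Re (w * d) = r * cmod d"
      using r \<zeta> by (simp add: w_def norm_mult) (simp add: wd)
    have "(cmod (p * w - a))^2 \<le> (cmod (b * w - 1))^2"
      using bound w r by (intro power_mono) auto
    moreover have "(cmod (b * w - 1))^2 - (cmod (p * w - a))^2
        = ((cmod b)^2 - (cmod p)^2) * (cmod w)^2 + 1 - (cmod a)^2 - 2 * Re (w * d)"
    proof -
      have "complex_of_real ((cmod (b * w - 1))^2 - (cmod (p * w - a))^2)
          = complex_of_real (((cmod b)^2 - (cmod p)^2) * (cmod w)^2 + 1 - (cmod a)^2) - ((w * d) + cnj (w * d))"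
        unfolding d_def complex_poly_expand by (simp add: algebra_simps)
      also have "\<dots> = complex_of_real (((cmod b)^2 - (cmod p)^2) * (cmod w)^2 + 1 - (cmod a)^2 - 2 * Re (w * d))"
        unfolding complex_add_cnj by simp
      finally show ?thesis by (simp only: of_real_eq_iff)
    qed
    moreover have "(- 2 * cmod d) * r = - 2 * (r * cmod d)" by simp
    ultimately show ?thesis unfolding w by linarith
  qed
  then have "0 \<le> (1 - (cmod a)^2) + (- 2 * cmod d) + ((cmod b)^2 - (cmod p)^2)"
    by (rule quadratic_nonneg_at_1)
  moreover have "cmod (b - cnj a * p) = cmod d" unfolding d_def by (simp add: mult.commute)
  moreover have "cmod b \<le> 1" using bound ball_mult_ne_1_iff by blast
  ultimately show ?thesis by linarith
qed

lemma real_sum_diff_bounds: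
  fixes r s t Y :: real
  assumes nonneg: "0 \<le> r" "0 \<le> s" "0 \<le> t"
    and Y: "r * t - s \<le> Y" "s - r * t \<le> Y"
    and cond5: "r^2 - s^2 + t^2 + 2 * Y \<le> 1" and s: "s \<le> 1"
  shows "r + t \<le> 1 + s" and "\<bar>r - t\<bar> \<le> 1 - s"
proof -
  have "(r + t)^2 \<le> (1 + s)^2"
    using cond5 Y by (simp add: power2_eq_square algebra_simps)
  then show "r + t \<le> 1 + s" using nonneg power2_le_imp_le[of "r + t" "1 + s"] by simp
  have "(r - t)^2 \<le> (1 - s)^2"
    using cond5 Y by (simp add: power2_eq_square algebra_simps)
  then show "\<bar>r - t\<bar> \<le> 1 - s" using s by (metis abs_le_square_iff abs_of_nonneg diff_ge_0_iff_ge)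
qed

text \<open>Applied with \<open>X, Y\<close> the defects \<open>\<bar>a - cnj b p\<bar>, \<bar>b - cnj a p\<bar>\<close>, \<open>s = \<bar>b\<bar>\<close> and \<open>t = \<bar>p\<bar>\<close>;
  the last hypothesis, from \<open>norm_defect_triangle\<close>, is what rules out \<open>Y > 1 - t\<^sup>2\<close>.\<close>
lemma cond5_real_defect_bound:
  fixes s t X Y :: real
  assumes nonneg: "0 \<le> t" "0 \<le> X" and t: "t < 1" and s: "s \<le> 1"
    and X: "X^2 \<le> (1 - t^2 - Y)^2" and identity: "Y - t * X \<le> s * (1 - t^2)"
  shows "X + Y \<le> 1 - t^2"
proof -
  have t2: "0 < 1 - t^2" using nonneg t by (simp add: abs_square_less_1)
  have "\<bar>X\<bar> \<le> \<bar>1 - t^2 - Y\<bar>" using X by (simp only: abs_le_square_iff)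
  then have X_abs: "X \<le> \<bar>1 - t^2 - Y\<bar>" using nonneg by simp
  have "Y \<le> 1 - t^2"
  proof (rule ccontr)
    assume "\<not> ?thesis"
    then have Y: "Y > 1 - t^2" by simp
    then have "t * X \<le> t * (Y - (1 - t^2))" using X_abs nonneg by (intro mult_left_mono) auto
    moreover have "(1 - t^2) * (1 - t) < Y * (1 - t)" using Y t by (intro mult_strict_right_mono) auto
    ultimately have "(1 - t^2) * 1 < s * (1 - t^2)" using identity by (simp add: algebra_simps power2_eq_square)
    then show False using s t2 by (simp add: mult_less_cancel_right2)
  qed
  then show ?thesis using X_abs by simp
qed

lemma norm_defect_diff_power2:
  "(cmod (a - cnj b * p))^2 - (cmod (b - cnj a * p))^2 = ((cmod a)^2 - (cmod b)^2) * (1 - (cmod p)^2)"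
proof -
  have "complex_of_real ((cmod (a - cnj b * p))^2 - (cmod (b - cnj a * p))^2)
      = complex_of_real (((cmod a)^2 - (cmod b)^2) * (1 - (cmod p)^2))"
    unfolding complex_poly_expand by (simp add: algebra_simps)
  then show ?thesis by (simp only: of_real_eq_iff)
qed

lemma norm_defect_triangle:
  assumes "cmod p \<le> 1"
  shows "cmod (b - cnj a * p) - cmod p * cmod (a - cnj b * p) \<le> cmod b * (1 - (cmod p)^2)"
proof -
  have "0 \<le> 1 - (cmod p)^2" using assms by (simp add: abs_square_le_1)
  then have "cmod b * (1 - (cmod p)^2) = cmod (b * of_real (1 - (cmod p)^2))"
    by (simp only: norm_mult norm_of_real abs_of_nonneg)
  also have "\<dots> = cmod ((b - cnj a * p) + cnj (a - cnj b * p) * p)"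
    by (simp only: tetrablock_defect_identity[of b p a])
  also have "\<dots> \<ge> cmod (b - cnj a * p) - cmod p * cmod (a - cnj b * p)"
    using norm_diff_ineq[of "b - cnj a * p" "cnj (a - cnj b * p) * p"]
    by (simp only: norm_mult complex_mod_cnj mult.commute)
  finally show ?thesis .
qed

lemma cond5_imp_closed_tetrablock:
  assumes cond5: "(cmod a)^2 - (cmod b)^2 + (cmod p)^2 + 2 * cmod (b - cnj a * p) \<le> 1"
    and b: "cmod b \<le> 1"
  shows "closed_tetrablock a b p"
proof -
  define r s t X Y where "r = cmod a" and "s = cmod b" and "t = cmod p"
    and "X = cmod (a - cnj b * p)" and "Y = cmod (b - cnj a * p)"
  note defs = r_def s_def t_def X_def Y_def
  have nonneg: "0 \<le> r" "0 \<le> s" "0 \<le> t" "0 \<le> X" "0 \<le> Y" unfolding defs by auto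
  have "r * t - s \<le> Y" "s - r * t \<le> Y"
    using norm_triangle_ineq2[of "cnj a * p" b] norm_triangle_ineq2[of b "cnj a * p"]
    unfolding defs by (simp_all add: norm_mult norm_minus_commute)
  note bounds = real_sum_diff_bounds[OF nonneg(1-3) this cond5[folded defs] b[folded defs]]
  have XY: "X^2 - Y^2 = (r^2 - s^2) * (1 - t^2)" unfolding defs by (rule norm_defect_diff_power2)
  have "X + Y \<le> 1 - t^2"
  proof (cases "t < 1")
    case True
    have "(r^2 - s^2) * (1 - t^2) \<le> (1 - t^2 - 2 * Y) * (1 - t^2)"
      using cond5[folded defs] True nonneg by (intro mult_right_mono) (auto simp: abs_square_le_1)
    then have "X^2 \<le> (1 - t^2 - Y)^2" using XY by (simp add: power2_eq_square algebra_simps)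
    moreover have "Y - t * X \<le> s * (1 - t^2)"
      using norm_defect_triangle[of p b a] True unfolding defs by simp
    ultimately show ?thesis using cond5_real_defect_bound nonneg True b unfolding s_def by blast
  next
    case False
    then have "t = 1" "r = s" using bounds by auto
    then have "Y = 0" using cond5[folded defs] nonneg by simp
    then have "X = 0" using XY \<open>t = 1\<close> nonneg by simp
    then show ?thesis using \<open>Y = 0\<close> \<open>t = 1\<close> by simp
  qed
  moreover have "t \<le> 1" "r \<le> 1" using bounds by auto
  ultimately show ?thesis unfolding closed_tetrablock_def using b unfolding defs by simp
qed

lemma cond6_real_defect_bound:
  fixes r s t Z :: real
  assumes nonneg: "0 \<le> r" "0 \<le> s" "0 \<le> t" and s: "s \<le> 1"
    and cond6: "r^2 + s^2 - t^2 + 2 * Z \<le> 1" and diff: "\<bar>r - s\<bar> \<le> 1 - t"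
  shows "Z \<le> 1 - s^2"
proof (rule ccontr)
  assume "\<not> ?thesis"
  then have c: "1 - s^2 < t^2 - r^2" using cond6 by linarith
  have s2: "s^2 \<le> 1" using s nonneg by (simp add: power_le_one)
  show False
  proof (cases "r * s \<le> t")
    case True
    have "r^2 < t^2" using c s2 by linarith
    then have "r < t" using nonneg by (simp add: power_less_imp_less_base)
    have "s^2 \<le> (r + (1 - t))^2" using diff nonneg by (intro power_mono) auto
    then have "t * (1 - t) < r * (1 - t)" using c by (simp add: power2_eq_square algebra_simps)
    moreover have "r * (1 - t) \<le> t * (1 - t)" using \<open>r < t\<close> diff by (intro mult_right_mono) auto
    ultimately show False by simp
  next
    case False
    then have "t^2 < (r * s)^2" using nonneg by (simp add: power_strict_mono)
    moreover have "s^2 * (1 + r^2) \<le> 1 * (1 + r^2)" using s2 by (intro mult_right_mono) auto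
    ultimately show False using c by (simp add: power_mult_distrib algebra_simps)
  qed
qed

lemma cond6_imp_cond4_real:
  fixes r s t X Z :: real
  assumes nonneg: "0 \<le> r" "0 \<le> s" "0 \<le> t" "0 \<le> X" "0 \<le> Z"
    and Z: "t - r * s \<le> Z" "r * s - t \<le> Z"
    and XZ: "X^2 = Z^2 + (1 - s^2) * (r^2 - t^2)"
    and t: "t \<le> 1" and cond6: "r^2 + s^2 - t^2 + 2 * Z \<le> 1"
  shows "X + Z \<le> 1 - s^2" and "r \<le> 1" and "s \<le> 1"
proof -
  have "r^2 - t^2 + s^2 + 2 * Z \<le> 1" using cond6 by simp
  note bounds = real_sum_diff_bounds[OF nonneg(1,3,2) Z(2) _ this t] Z(1)[simplified mult.commute]
  then show "r \<le> 1" and s: "s \<le> 1" by (auto simp: mult.commute)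
  have s2: "s^2 \<le> 1" using s nonneg by (simp add: power_le_one)
  have Zle: "Z \<le> 1 - s^2"
    using cond6_real_defect_bound[OF nonneg(1-3) s cond6] bounds by (simp add: mult.commute)
  have "(1 - s^2) * (r^2 - t^2) \<le> (1 - s^2) * (1 - s^2 - 2 * Z)"
    using cond6 s2 by (intro mult_left_mono) auto
  then have "X^2 \<le> (1 - s^2 - Z)^2" using XZ by (simp add: power2_eq_square algebra_simps)
  then have "X \<le> 1 - s^2 - Z" using Zle nonneg power2_le_imp_le[of X "1 - s^2 - Z"] by simp
  then show "X + Z \<le> 1 - s^2" by simp
qed

lemma cond4_imp_cond6_real:
  fixes r s t X Z :: real
  assumes nonneg: "0 \<le> r" "0 \<le> s" "0 \<le> t" "0 \<le> X" "0 \<le> Z"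
    and Z: "t - r * s \<le> Z" and X: "r - s * t \<le> X" "s * t - r \<le> X"
    and XZ: "X^2 = Z^2 + (1 - s^2) * (r^2 - t^2)"
    and s: "s < 1" and cond4: "X + Z \<le> 1 - s^2"
  shows "t \<le> 1" and "r^2 + s^2 - t^2 + 2 * Z \<le> 1"
proof -
  have s2: "1 - s^2 > 0" using s nonneg by (simp add: abs_square_less_1)
  have "X^2 \<le> (1 - s^2 - Z)^2" using cond4 nonneg by (intro power_mono) auto
  then have "(1 - s^2) * (r^2 - t^2) \<le> (1 - s^2) * (1 - s^2 - 2 * Z)"
    using XZ by (simp add: power2_eq_square algebra_simps)
  then have diff: "r^2 - t^2 \<le> 1 - s^2 - 2 * Z" using s2 by (simp add: mult_le_cancel_left_pos)
  have "(t - r) * (1 + s) \<le> (1 - s) * (1 + s)"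
    using Z X cond4 by (simp add: power2_eq_square algebra_simps)
  then have "t - r \<le> 1 - s" using nonneg by (simp add: mult_le_cancel_right_pos add_pos_nonneg)
  moreover have "(r + t) * (1 - s) \<le> (1 + s) * (1 - s)"
    using Z X cond4 by (simp add: power2_eq_square algebra_simps)
  then have "r + t \<le> 1 + s" using s by (simp add: mult_le_cancel_right_pos)
  ultimately show "t \<le> 1" using nonneg by linarith
  show "r^2 + s^2 - t^2 + 2 * Z \<le> 1" using diff by linarith
qed

lemma norm_defect_power2_eq:
  "(cmod (a - cnj b * p))^2 = (cmod (a * b - p))^2 + (1 - (cmod b)^2) * ((cmod a)^2 - (cmod p)^2)"
proof -
  have "complex_of_real ((cmod (a - cnj b * p))^2)
      = complex_of_real ((cmod (a * b - p))^2 + (1 - (cmod b)^2) * ((cmod a)^2 - (cmod p)^2))"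
    unfolding complex_poly_expand by (simp add: algebra_simps)
  then show ?thesis by (simp only: of_real_eq_iff)
qed

lemma cond4_iff_cond6:
  "cmod (a - cnj b * p) + cmod (a * b - p) \<le> 1 - (cmod b)^2 \<and> (a * b = p \<longrightarrow> cmod a \<le> 1)
   \<longleftrightarrow> cmod p \<le> 1 \<and> (cmod a)^2 + (cmod b)^2 - (cmod p)^2 + 2 * cmod (a * b - p) \<le> 1"
proof -
  define r s t X Z where "r = cmod a" and "s = cmod b" and "t = cmod p"
    and "X = cmod (a - cnj b * p)" and "Z = cmod (a * b - p)"
  note defs = r_def s_def t_def X_def Z_def
  have nonneg: "0 \<le> r" "0 \<le> s" "0 \<le> t" "0 \<le> X" "0 \<le> Z" unfolding defs by auto
  have Z: "t - r * s \<le> Z" "r * s - t \<le> Z"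
    using norm_triangle_ineq2[of p "a * b"] norm_triangle_ineq2[of "a * b" p]
    unfolding defs by (simp_all add: norm_mult norm_minus_commute)
  have X: "r - s * t \<le> X" "s * t - r \<le> X"
    using norm_triangle_ineq2[of a "cnj b * p"] norm_triangle_ineq2[of "cnj b * p" a]
    unfolding defs by (simp_all add: norm_mult norm_minus_commute)
  have XZ: "X^2 = Z^2 + (1 - s^2) * (r^2 - t^2)" unfolding defs by (rule norm_defect_power2_eq)
  have "X + Z \<le> 1 - s^2 \<and> (Z = 0 \<longrightarrow> r \<le> 1) \<longleftrightarrow> t \<le> 1 \<and> r^2 + s^2 - t^2 + 2 * Z \<le> 1"
  proof
    assume cond4: "X + Z \<le> 1 - s^2 \<and> (Z = 0 \<longrightarrow> r \<le> 1)"
    show "t \<le> 1 \<and> r^2 + s^2 - t^2 + 2 * Z \<le> 1"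
    proof (cases "s < 1")
      case True
      then show ?thesis using cond4_imp_cond6_real[OF nonneg Z(1) X XZ True] cond4 by simp
    next
      case False
      have "s^2 \<le> 1" using cond4 nonneg by linarith
      then have "s = 1" using False nonneg by (simp add: power_le_one_iff)
      then have "Z = 0" "r \<le> 1" using cond4 nonneg by auto
      moreover have "t = r" using \<open>Z = 0\<close> \<open>s = 1\<close> unfolding defs by (auto simp: norm_mult)
      ultimately show ?thesis using \<open>s = 1\<close> by simp
    qed
  next
    assume "t \<le> 1 \<and> r^2 + s^2 - t^2 + 2 * Z \<le> 1"
    then show "X + Z \<le> 1 - s^2 \<and> (Z = 0 \<longrightarrow> r \<le> 1)" using cond6_imp_cond4_real[OF nonneg Z XZ] by simp
  qed
  then show ?thesis unfolding defs by simp
qed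

lemma closed_tetrablock_imp_cond6:
  assumes "closed_tetrablock a b p"
  shows "cmod p \<le> 1 \<and> (cmod a)^2 + (cmod b)^2 - (cmod p)^2 + 2 * cmod (a * b - p) \<le> 1"
proof -
  have "closed_tetrablock b a p" using assms closed_tetrablock_commute by blast
  then show ?thesis
    using beta_repr_imp_cond6[OF closed_tetrablock_beta_repr(1)[OF assms]
        closed_tetrablock_beta_repr(1)[OF \<open>closed_tetrablock b a p\<close>]
        closed_tetrablock_beta_repr(2)[OF assms]] assms
    unfolding closed_tetrablock_def by simp
qed

lemma cond2_imp_closed_tetrablock:
  assumes "\<forall>z\<in>ball 0 1. \<forall>w\<in>ball 0 1. 1 - a * z - b * w + p * z * w \<noteq> 0"
  shows "closed_tetrablock a b p"
  using assms cond5_imp_closed_tetrablock moebius_bound_imp_cond5 nonvanishing_iff_moebius_bound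
  by blast

lemma contraction_imp_closed_tetrablock:
  fixes B :: "complex^2^2"
  assumes "onorm (\<lambda>x. B *v x) \<le> 1" "B$1$1 = a" "B$2$2 = b" "det B = p"
  shows "closed_tetrablock a b p"
  using contraction_nonvanishing[OF assms(1)] assms(2-4) by (intro cond2_imp_closed_tetrablock) auto

lemma closed_tetrablock_iff_cond9:
  "closed_tetrablock a b p \<longleftrightarrow>
   (\<exists>B :: complex^2^2. onorm (\<lambda>x. B *v x) \<le> 1 \<and> transpose B = B \<and> B$1$1 = a \<and> B$2$2 = b \<and> det B = p)"
  using closed_tetrablock_imp_cond6 cond6_imp_symmetric_contraction contraction_imp_closed_tetrablock
  by metis

lemma closed_tetrablock_iff_cond8:
  "closed_tetrablock a b p \<longleftrightarrow>
   (\<exists>B :: complex^2^2. onorm (\<lambda>x. B *v x) \<le> 1 \<and> B$1$1 = a \<and> B$2$2 = b \<and> det B = p)"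
  using closed_tetrablock_iff_cond9 contraction_imp_closed_tetrablock by metis

lemma closed_tetrablock_iff_cond2:
  "closed_tetrablock a b p \<longleftrightarrow> (\<forall>z\<in>ball 0 1. \<forall>w\<in>ball 0 1. 1 - a * z - b * w + p * z * w \<noteq> 0)"
  using closed_tetrablock_iff_cond8 contraction_nonvanishing cond2_imp_closed_tetrablock
  by (metis mem_ball_0)

lemma closed_tetrablock_iff_moebius_bound:
  "closed_tetrablock a b p \<longleftrightarrow> (\<forall>w\<in>ball 0 1. b * w \<noteq> 1 \<and> cmod (p * w - a) \<le> cmod (b * w - 1))"
  using closed_tetrablock_iff_cond2 nonvanishing_iff_moebius_bound by blast

lemma closed_tetrablock_iff_cond5:
  "closed_tetrablock a b p \<longleftrightarrow>
   (cmod a)^2 - (cmod b)^2 + (cmod p)^2 + 2 * cmod (b - cnj a * p) \<le> 1 \<and> cmod b \<le> 1"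
  using closed_tetrablock_iff_moebius_bound moebius_bound_imp_cond5 cond5_imp_closed_tetrablock by blast

lemma closed_tetrablock_iff_cond6:
  "closed_tetrablock a b p \<longleftrightarrow>
   cmod p \<le> 1 \<and> (cmod a)^2 + (cmod b)^2 - (cmod p)^2 + 2 * cmod (a * b - p) \<le> 1"
  using closed_tetrablock_imp_cond6 cond6_imp_symmetric_contraction closed_tetrablock_iff_cond9 by metis

lemma closed_tetrablock_iff_cond4:
  "closed_tetrablock a b p \<longleftrightarrow>
   cmod (a - cnj b * p) + cmod (a * b - p) \<le> 1 - (cmod b)^2 \<and> (a * b = p \<longrightarrow> cmod a \<le> 1)"
  using closed_tetrablock_iff_cond6 cond4_iff_cond6 by blast

section \<open>Rescaled coordinates\<close>

lemma diff_eq_pos_mult_imp_le_iff: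
  fixes k x y x' y' :: real
  assumes "0 < k" and "x - y = k * (x' - y')"
  shows "x \<le> y \<longleftrightarrow> x' \<le> y'"
proof -
  have "x - y \<le> 0 \<longleftrightarrow> x' - y' \<le> 0" using assms by (simp add: mult_le_0_iff)
  then show ?thesis by simp
qed

context
  fixes C :: real and u v a b q :: complex
  assumes C: "0 < C" and u: "u = of_real C * a" and v: "v = of_real C * b"
begin

lemma scaled_norms:
  "cmod u = C * cmod a" "cmod v = C * cmod b"
  "cmod (u - cnj v * q) = C * cmod (a - cnj b * q)" "cmod (v - cnj u * q) = C * cmod (b - cnj a * q)"
  "cmod (u * v - of_real (C^2) * q) = C^2 * cmod (a * b - q)"
proof -
  have "u - cnj v * q = of_real C * (a - cnj b * q)" "v - cnj u * q = of_real C * (b - cnj a * q)"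
    "u * v - of_real (C^2) * q = of_real (C^2) * (a * b - q)"
    unfolding u v by (simp_all add: algebra_simps power2_eq_square)
  then show "cmod u = C * cmod a" "cmod v = C * cmod b"
    "cmod (u - cnj v * q) = C * cmod (a - cnj b * q)" "cmod (v - cnj u * q) = C * cmod (b - cnj a * q)"
    "cmod (u * v - of_real (C^2) * q) = C^2 * cmod (a * b - q)"
    using C unfolding u v by (simp_all add: norm_mult norm_power)
qed

lemma scaled_degenerate_iff: "u * v = of_real (C^2) * q \<longleftrightarrow> a * b = q"
  using C unfolding u v by (auto simp: power2_eq_square algebra_simps)

lemma scaled_cond2_iff:
  "(\<forall>z\<in>ball 0 1. \<forall>w\<in>ball 0 1. of_real C - u * z - v * w + of_real C * q * z * w \<noteq> 0)
   \<longleftrightarrow> closed_tetrablock a b q"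
proof -
  have "of_real C - u * z - v * w + of_real C * q * z * w = of_real C * (1 - a * z - b * w + q * z * w)"
    for z w unfolding u v by (simp add: algebra_simps)
  then show ?thesis using C unfolding closed_tetrablock_iff_cond2 by simp
qed

lemma scaled_cond4_iff:
  "C * cmod (u - cnj v * q) + cmod (u * v - of_real (C^2) * q) \<le> C^2 - (cmod v)^2 \<and>
     (u * v = of_real (C^2) * q \<longrightarrow> cmod u \<le> C)
   \<longleftrightarrow> closed_tetrablock a b q"
proof -
  have "C * cmod (u - cnj v * q) + cmod (u * v - of_real (C^2) * q) - (C^2 - (cmod v)^2)
      = C^2 * (cmod (a - cnj b * q) + cmod (a * b - q) - (1 - (cmod b)^2))"
    unfolding scaled_norms by (simp add: power2_eq_square algebra_simps)
  then have "C * cmod (u - cnj v * q) + cmod (u * v - of_real (C^2) * q) \<le> C^2 - (cmod v)^2 \<longleftrightarrow>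
      cmod (a - cnj b * q) + cmod (a * b - q) \<le> 1 - (cmod b)^2"
    by (rule diff_eq_pos_mult_imp_le_iff[rotated]) (use C in simp)
  moreover have "cmod u \<le> C \<longleftrightarrow> cmod a \<le> 1" using C by (simp add: scaled_norms)
  ultimately show ?thesis unfolding closed_tetrablock_iff_cond4 scaled_degenerate_iff by blast
qed

lemma scaled_cond4_swap_iff:
  "C * cmod (v - cnj u * q) + cmod (u * v - of_real (C^2) * q) \<le> C^2 - (cmod u)^2 \<and>
     (u * v = of_real (C^2) * q \<longrightarrow> cmod v \<le> C)
   \<longleftrightarrow> closed_tetrablock a b q"
proof -
  have "C * cmod (v - cnj u * q) + cmod (u * v - of_real (C^2) * q) - (C^2 - (cmod u)^2)
      = C^2 * (cmod (b - cnj a * q) + cmod (b * a - q) - (1 - (cmod a)^2))"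
    unfolding scaled_norms by (simp add: power2_eq_square algebra_simps)
  then have "C * cmod (v - cnj u * q) + cmod (u * v - of_real (C^2) * q) \<le> C^2 - (cmod u)^2 \<longleftrightarrow>
      cmod (b - cnj a * q) + cmod (b * a - q) \<le> 1 - (cmod a)^2"
    by (rule diff_eq_pos_mult_imp_le_iff[rotated]) (use C in simp)
  moreover have "cmod v \<le> C \<longleftrightarrow> cmod b \<le> 1" using C by (simp add: scaled_norms)
  moreover have "closed_tetrablock a b q \<longleftrightarrow>
      cmod (b - cnj a * q) + cmod (b * a - q) \<le> 1 - (cmod a)^2 \<and> (a * b = q \<longrightarrow> cmod b \<le> 1)"
    by (subst closed_tetrablock_commute) (simp add: closed_tetrablock_iff_cond4 mult.commute)
  ultimately show ?thesis unfolding scaled_degenerate_iff by blast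
qed

lemma scaled_cond5_iff:
  "(cmod u)^2 - (cmod v)^2 + C^2 * (cmod q)^2 + 2 * C * cmod (v - cnj u * q) \<le> C^2 \<and> cmod v \<le> C
   \<longleftrightarrow> closed_tetrablock a b q"
proof -
  have "(cmod u)^2 - (cmod v)^2 + C^2 * (cmod q)^2 + 2 * C * cmod (v - cnj u * q) - C^2
      = C^2 * ((cmod a)^2 - (cmod b)^2 + (cmod q)^2 + 2 * cmod (b - cnj a * q) - 1)"
    unfolding scaled_norms by (simp add: power2_eq_square algebra_simps)
  then have "(cmod u)^2 - (cmod v)^2 + C^2 * (cmod q)^2 + 2 * C * cmod (v - cnj u * q) \<le> C^2 \<longleftrightarrow>
      (cmod a)^2 - (cmod b)^2 + (cmod q)^2 + 2 * cmod (b - cnj a * q) \<le> 1"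
    by (rule diff_eq_pos_mult_imp_le_iff[rotated]) (use C in simp)
  moreover have "cmod v \<le> C \<longleftrightarrow> cmod b \<le> 1" using C by (simp add: scaled_norms)
  ultimately show ?thesis unfolding closed_tetrablock_iff_cond5 by blast
qed

lemma scaled_cond6_iff:
  "cmod q \<le> 1 \<and> (cmod u)^2 + (cmod v)^2 - C^2 * (cmod q)^2 + 2 * cmod (u * v - of_real (C^2) * q) \<le> C^2
   \<longleftrightarrow> closed_tetrablock a b q"
proof -
  have "(cmod u)^2 + (cmod v)^2 - C^2 * (cmod q)^2 + 2 * cmod (u * v - of_real (C^2) * q) - C^2
      = C^2 * ((cmod a)^2 + (cmod b)^2 - (cmod q)^2 + 2 * cmod (a * b - q) - 1)"
    unfolding scaled_norms by (simp add: power2_eq_square algebra_simps)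
  then have "(cmod u)^2 + (cmod v)^2 - C^2 * (cmod q)^2 + 2 * cmod (u * v - of_real (C^2) * q) \<le> C^2 \<longleftrightarrow>
      (cmod a)^2 + (cmod b)^2 - (cmod q)^2 + 2 * cmod (a * b - q) \<le> 1"
    by (rule diff_eq_pos_mult_imp_le_iff[rotated]) (use C in simp)
  then show ?thesis unfolding closed_tetrablock_iff_cond6 by blast
qed

lemma scaled_cond7_iff:
  "cmod (v - cnj u * q) + cmod (u - cnj v * q) \<le> C * (1 - (cmod q)^2) \<and> (cmod q = 1 \<longrightarrow> cmod u \<le> C)
   \<longleftrightarrow> closed_tetrablock a b q"
  using C unfolding closed_tetrablock_iff_cond7 scaled_norms
  by (simp add: add.commute flip: distrib_left)

lemma scaled_cond8_iff:
  "(\<exists>B :: complex^2^2. onorm (\<lambda>x. B *v x) \<le> 1 \<and>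
      u = of_real C * B$1$1 \<and> v = of_real C * B$2$2 \<and> det B = q)
   \<longleftrightarrow> closed_tetrablock a b q"
  using C unfolding closed_tetrablock_iff_cond8 u v by auto

lemma scaled_cond9_iff:
  "(\<exists>B :: complex^2^2. onorm (\<lambda>x. B *v x) \<le> 1 \<and> transpose B = B \<and>
      u = of_real C * B$1$1 \<and> v = of_real C * B$2$2 \<and> det B = q)
   \<longleftrightarrow> closed_tetrablock a b q"
  using C unfolding closed_tetrablock_iff_cond9 u v by auto

end

lemma closed_tetrablock_degenerate_iff: "closed_tetrablock a b (a * b) \<longleftrightarrow> cmod a \<le> 1 \<and> cmod b \<le> 1"
proof -
  have "cmod (a * b * w - a) = cmod a * cmod (b * w - 1)" for w
    by (metis norm_mult right_diff_distrib mult.assoc mult_1_right)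
  then have "closed_tetrablock a b (a * b) \<longleftrightarrow>
      (\<forall>w\<in>ball 0 1. b * w \<noteq> 1 \<and> cmod a * cmod (b * w - 1) \<le> cmod (b * w - 1))"
    unfolding closed_tetrablock_iff_moebius_bound by simp
  also have "\<dots> \<longleftrightarrow> cmod b \<le> 1 \<and> cmod a \<le> 1"
  proof
    assume bound: "\<forall>w\<in>ball 0 1. b * w \<noteq> 1 \<and> cmod a * cmod (b * w - 1) \<le> cmod (b * w - 1)"
    moreover have "(0::complex) \<in> ball 0 1" by simp
    ultimately have "cmod a * cmod (b * 0 - 1) \<le> cmod (b * 0 - 1)" by blast
    then show "cmod b \<le> 1 \<and> cmod a \<le> 1" using bound ball_mult_ne_1_iff by auto
  next
    assume "cmod b \<le> 1 \<and> cmod a \<le> 1"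
    then show "\<forall>w\<in>ball 0 1. b * w \<noteq> 1 \<and> cmod a * cmod (b * w - 1) \<le> cmod (b * w - 1)"
      using ball_mult_ne_1_iff[of b] by (simp add: mult_left_le_one_le)
  qed
  finally show ?thesis by blast
qed

lemma Phi_cond3_iff:
  assumes C: "C = real (n choose k)" "0 < C" and u: "y k = of_real C * a" and v: "y (n - k) = of_real C * b"
  shows "Phi_Hinf n k y q \<le> 1 \<and> (y k * y (n - k) = of_real (C^2) * q \<longrightarrow> cmod (y (n - k)) \<le> C)
    \<longleftrightarrow> closed_tetrablock a b q"
proof -
  have c: "(of_nat (n choose k) :: complex) = of_real C" using C by simp
  have degenerate: "y k * y (n - k) = of_real (C^2) * q \<longleftrightarrow> a * b = q"
    using scaled_degenerate_iff[OF C(2) u v] .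
  have b_bound: "cmod (y (n - k)) \<le> C \<longleftrightarrow> cmod b \<le> 1" using scaled_norms(2)[OF C(2) u v] C by simp
  have Hinf: "Phi_Hinf n k y q \<le> 1 \<longleftrightarrow>
      (\<forall>z\<in>ball 0 1. Phi n k y q z \<noteq> None \<and> cmod (the (Phi n k y q z)) \<le> 1)"
    unfolding Phi_Hinf_def by (auto simp: SUP_le_iff)
  show ?thesis
  proof (cases "a * b = q")
    case True
    then have "Phi n k y q z = Some a" for z
      unfolding Phi_def Let_def c using degenerate C u by (simp add: of_real_power)
    then have "Phi_Hinf n k y q \<le> 1 \<longleftrightarrow> cmod a \<le> 1"
      unfolding Hinf using centre_in_ball[of "0::complex" 1] by (metis option.distinct(1) option.sel zero_less_one)
    then show ?thesis using True degenerate b_bound closed_tetrablock_degenerate_iff by auto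
  next
    case False
    have "Phi n k y q z = (if b * z \<noteq> 1 then Some ((q * z - a) / (b * z - 1)) else None)" for z
    proof -
      have "y (n - k) * z \<noteq> of_real C \<longleftrightarrow> b * z \<noteq> 1" unfolding v using C by simp
      moreover have "(of_real C * q * z - y k) / (y (n - k) * z - of_real C)
          = (of_real C * (q * z - a)) / (of_real C * (b * z - 1))"
        unfolding u v by (simp add: algebra_simps)
      then have "(of_real C * q * z - y k) / (y (n - k) * z - of_real C) = (q * z - a) / (b * z - 1)"
        using C by (simp only: mult_divide_mult_cancel_left_if) simp
      ultimately show ?thesis unfolding Phi_def Let_def c using False degenerate by (simp add: of_real_power)
    qed
    then have "Phi_Hinf n k y q \<le> 1 \<longleftrightarrow> closed_tetrablock a b q"
      unfolding Hinf closed_tetrablock_iff_moebius_bound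
      by (auto simp: norm_divide divide_le_eq_1 norm_minus_commute)
    then show ?thesis using degenerate False by simp
  qed
qed

section \<open>The closure of \<open>Gtilde n\<close>\<close>

definition pairwise_tetrablock :: "nat \<Rightarrow> ((nat \<Rightarrow> complex) \<times> complex) set" where
  "pairwise_tetrablock n = {(y, q). \<forall>j\<in>{1..n-1}.
     closed_tetrablock (y j / of_nat (n choose j)) (y (n - j) / of_nat (n choose j)) q}"

definition pairwise_beta :: "nat \<Rightarrow> (nat \<Rightarrow> complex) \<Rightarrow> complex \<Rightarrow> nat \<Rightarrow> complex" where
  "pairwise_beta n y q i =
     of_nat (n choose i) * tetrablock_beta (y i / of_nat (n choose i)) (y (n - i) / of_nat (n choose i)) q"

lemma pairwise_beta_repr:
  assumes j: "j \<le> n"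
    and T: "closed_tetrablock (y j / of_nat (n choose j)) (y (n - j) / of_nat (n choose j)) q"
  defines "\<beta> \<equiv> pairwise_beta n y q"
  shows "y j = \<beta> j + cnj (\<beta> (n - j)) * q" and "y (n - j) = \<beta> (n - j) + cnj (\<beta> j) * q"
    and "cmod (\<beta> j) + cmod (\<beta> (n - j)) \<le> real (n choose j)"
proof -
  define C where "C = (of_nat (n choose j) :: complex)"
  define a b where "a = y j / C" and "b = y (n - j) / C"
  have C: "C \<noteq> 0" "cmod C = real (n choose j)" using j unfolding C_def by simp_all
  have \<beta>: "\<beta> j = C * tetrablock_beta a b q" "\<beta> (n - j) = C * tetrablock_beta b a q"
    using j unfolding \<beta>_def pairwise_beta_def a_def b_def C_def by (simp_all add: binomial_symmetric[symmetric])
  have Tab: "closed_tetrablock a b q" and Tba: "closed_tetrablock b a q"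
    using T closed_tetrablock_commute unfolding a_def b_def C_def by blast+
  have "y j = C * a" using C unfolding a_def by simp
  also have "\<dots> = C * (tetrablock_beta a b q + cnj (tetrablock_beta b a q) * q)"
    using closed_tetrablock_beta_repr(1)[OF Tab] by (rule arg_cong)
  finally show "y j = \<beta> j + cnj (\<beta> (n - j)) * q" unfolding \<beta> C_def by (simp add: algebra_simps)
  have "y (n - j) = C * b" using C unfolding b_def by simp
  also have "\<dots> = C * (tetrablock_beta b a q + cnj (tetrablock_beta a b q) * q)"
    using closed_tetrablock_beta_repr(1)[OF Tba] by (rule arg_cong)
  finally show "y (n - j) = \<beta> (n - j) + cnj (\<beta> j) * q" unfolding \<beta> C_def by (simp add: algebra_simps)
  have "cmod (\<beta> j) + cmod (\<beta> (n - j)) = cmod C * (cmod (tetrablock_beta a b q) + cmod (tetrablock_beta b a q))"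
    unfolding \<beta> by (simp add: norm_mult algebra_simps)
  also have "\<dots> \<le> cmod C" using closed_tetrablock_beta_repr(2)[OF Tab] by (simp add: mult_left_le)
  finally show "cmod (\<beta> j) + cmod (\<beta> (n - j)) \<le> real (n choose j)" using C by simp
qed

lemma scaled_beta_repr_imp_closed_tetrablock:
  assumes C: "0 < C" and u: "u = \<beta>\<^sub>1 + cnj \<beta>\<^sub>2 * q" and v: "v = \<beta>\<^sub>2 + cnj \<beta>\<^sub>1 * q"
    and \<beta>: "cmod \<beta>\<^sub>1 + cmod \<beta>\<^sub>2 \<le> C" and q: "cmod q \<le> 1"
  shows "closed_tetrablock (u / of_real C) (v / of_real C) q"
proof (rule beta_repr_imp_closed_tetrablock[OF _ _ _ q])
  show "u / of_real C = \<beta>\<^sub>1 / of_real C + cnj (\<beta>\<^sub>2 / of_real C) * q"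
    "v / of_real C = \<beta>\<^sub>2 / of_real C + cnj (\<beta>\<^sub>1 / of_real C) * q"
    unfolding u v by (simp_all add: add_divide_distrib)
  show "cmod (\<beta>\<^sub>1 / of_real C) + cmod (\<beta>\<^sub>2 / of_real C) \<le> 1"
    using \<beta> C by (simp add: norm_divide add_divide_distrib[symmetric])
qed

lemma closed_closed_tetrablock:
  fixes f g h :: "'a::topological_space \<Rightarrow> complex"
  assumes "continuous_on UNIV f" "continuous_on UNIV g" "continuous_on UNIV h"
  shows "closed {x. closed_tetrablock (f x) (g x) (h x)}"
  unfolding closed_tetrablock_def Collect_conj_eq
  by (intro closed_Int closed_Collect_le continuous_intros assms continuous_on_cnj)

lemma closed_pairwise_tetrablock: "closed (pairwise_tetrablock n)"
proof -
  have coordinate: "continuous_on UNIV (\<lambda>x :: (nat \<Rightarrow> complex) \<times> complex. fst x j)" for j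
    by (rule continuous_on_product_then_coordinatewise) (intro continuous_intros)
  have "pairwise_tetrablock n = (\<Inter>j\<in>{1..n-1}. {x. closed_tetrablock
      (fst x j / of_nat (n choose j)) (fst x (n - j) / of_nat (n choose j)) (snd x)})"
    unfolding pairwise_tetrablock_def by auto
  also have "closed \<dots>"
    by (intro closed_INT ballI closed_closed_tetrablock continuous_intros coordinate) auto
  finally show ?thesis .
qed

lemma Gtilde_subset_pairwise_tetrablock: "Gtilde n \<subseteq> pairwise_tetrablock n"
proof safe
  fix y q assume "(y, q) \<in> Gtilde n"
  then have q: "cmod q < 1" and "\<exists>\<beta>. \<forall>j\<in>{1..n-1}.
      y j = \<beta> j + cnj (\<beta> (n - j)) * q \<and> cmod (\<beta> j) + cmod (\<beta> (n - j)) < real (n choose j)"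
    unfolding Gtilde_def by auto
  then obtain \<beta> where \<beta>: "\<And>j. j \<in> {1..n-1} \<Longrightarrow>
      y j = \<beta> j + cnj (\<beta> (n - j)) * q \<and> cmod (\<beta> j) + cmod (\<beta> (n - j)) < real (n choose j)"
    by blast
  have "closed_tetrablock (y j / of_nat (n choose j)) (y (n - j) / of_nat (n choose j)) q"
    if j: "j \<in> {1..n-1}" for j
  proof -
    have "n - j \<in> {1..n-1}" "n - (n - j) = j" "n choose (n - j) = n choose j"
      using j by (auto simp: binomial_symmetric[symmetric])
    then have "y (n - j) = \<beta> (n - j) + cnj (\<beta> j) * q" using \<beta> by force
    then have "closed_tetrablock (y j / of_real (real (n choose j))) (y (n - j) / of_real (real (n choose j))) q"
      by (intro scaled_beta_repr_imp_closed_tetrablock) (use \<beta>[OF j] j q in auto)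
    then show ?thesis by simp
  qed
  then show "(y, q) \<in> pairwise_tetrablock n" unfolding pairwise_tetrablock_def by auto
qed

lemma dilated_beta_repr_in_Gtilde:
  assumes \<beta>: "\<And>j. j \<in> {1..n-1} \<Longrightarrow> cmod (\<beta> j) + cmod (\<beta> (n - j)) \<le> real (n choose j)"
    and q: "cmod q \<le> 1" and r: "0 \<le> r" "r < 1"
    and y: "\<And>j. j \<in> {1..n-1} \<Longrightarrow> y j = of_real r * \<beta> j + cnj (of_real r * \<beta> (n - j)) * (of_real r * q)"
  shows "(y, of_real r * q) \<in> Gtilde n"
proof -
  have "cmod (of_real r * q) = r * cmod q" using r by (simp add: norm_mult)
  also have "\<dots> \<le> r" using q r by (simp add: mult_left_le)
  finally have "cmod (of_real r * q) < 1" using r by simp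
  moreover have "cmod (of_real r * \<beta> j) + cmod (of_real r * \<beta> (n - j)) < real (n choose j)"
    if j: "j \<in> {1..n-1}" for j
  proof -
    have "cmod (of_real r * \<beta> j) + cmod (of_real r * \<beta> (n - j)) = r * (cmod (\<beta> j) + cmod (\<beta> (n - j)))"
      using r by (simp add: norm_mult algebra_simps)
    also have "\<dots> \<le> r * real (n choose j)" using \<beta>[OF j] r by (intro mult_left_mono) auto
    also have "\<dots> < real (n choose j)" using r j by (simp add: mult_less_cancel_right2; arith)
    finally show ?thesis .
  qed
  ultimately show ?thesis
    unfolding Gtilde_def using y by (auto intro!: exI[of _ "\<lambda>i. of_real r * \<beta> i"])
qed

text \<open>A point of \<open>pairwise_tetrablock n\<close> is the endpoint of the path \<open>r \<mapsto>\<close> (dilate its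
  \<open>\<beta>\<close>-representation by \<open>r\<close>), which lies in \<open>Gtilde n\<close> for \<open>0 \<le> r < 1\<close>.\<close>
lemma pairwise_tetrablock_subset_closure_Gtilde:
  assumes "2 \<le> n"
  shows "pairwise_tetrablock n \<subseteq> closure (Gtilde n)"
proof safe
  fix y q assume "(y, q) \<in> pairwise_tetrablock n"
  then have T: "closed_tetrablock (y j / of_nat (n choose j)) (y (n - j) / of_nat (n choose j)) q"
    if "j \<in> {1..n-1}" for j
    using that unfolding pairwise_tetrablock_def by auto
  have q: "cmod q \<le> 1" using T[of 1] assms unfolding closed_tetrablock_def by auto
  define \<beta> where "\<beta> = pairwise_beta n y q"
  have \<beta>: "y j = \<beta> j + cnj (\<beta> (n - j)) * q" "cmod (\<beta> j) + cmod (\<beta> (n - j)) \<le> real (n choose j)"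
    if "j \<in> {1..n-1}" for j
    using pairwise_beta_repr[OF _ T[OF that]] that unfolding \<beta>_def by auto
  define g where "g r = ((\<lambda>i. if i \<in> {1..n-1}
      then of_real r * \<beta> i + cnj (of_real r * \<beta> (n - i)) * (of_real r * q) else y i), of_real r * q)"
    for r :: real
  have coordinate: "continuous_on UNIV (\<lambda>r::real. if i \<in> {1..n-1}
      then of_real r * \<beta> i + cnj (of_real r * \<beta> (n - i)) * (of_real r * q) else y i)" for i
  proof (cases "i \<in> {1..n-1}")
    case True
    then show ?thesis by (simp only: True if_True) (intro continuous_intros)
  qed (simp only: if_False continuous_on_const)
  have "continuous_on UNIV g"
    unfolding g_def by (intro continuous_intros continuous_on_coordinatewise_then_product coordinate)
  then have "continuous_on (closure {0..<1}) g" by (rule continuous_on_subset) simp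
  moreover have "g ` {0..<1} \<subseteq> closure (Gtilde n)"
  proof (intro image_subsetI subsetD[OF closure_subset])
    fix r :: real assume "r \<in> {0..<1}"
    then show "g r \<in> Gtilde n" unfolding g_def by (intro dilated_beta_repr_in_Gtilde q) (use \<beta> in auto)
  qed
  ultimately have "g ` closure {0..<1} \<subseteq> closure (Gtilde n)" by (intro image_closure_subset) auto
  moreover have "g 1 = (y, q)" unfolding g_def using \<beta> by (auto simp: fun_eq_iff)
  moreover have "g 1 \<in> g ` closure {0..<1}" by (simp add: closure_atLeastLessThan)
  ultimately show "(y, q) \<in> closure (Gtilde n)" by auto
qed

lemma Gammatilde_eq_pairwise_tetrablock:
  assumes "2 \<le> n"
  shows "Gammatilde n = pairwise_tetrablock n"
  unfolding Gammatilde_def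
  using pairwise_tetrablock_subset_closure_Gtilde[OF assms]
    closure_minimal[OF Gtilde_subset_pairwise_tetrablock closed_pairwise_tetrablock]
  by blast

lemma mem_pairwise_tetrablock_iff:
  "(y, q) \<in> pairwise_tetrablock n \<longleftrightarrow> (\<forall>j\<in>{1..n div 2}.
     closed_tetrablock (y j / of_nat (n choose j)) (y (n - j) / of_nat (n choose j)) q)"
proof -
  have "closed_tetrablock (y j / of_nat (n choose j)) (y (n - j) / of_nat (n choose j)) q"
    if "j \<in> {1..n-1}" and half: "\<forall>j\<in>{1..n div 2}.
        closed_tetrablock (y j / of_nat (n choose j)) (y (n - j) / of_nat (n choose j)) q" for j
  proof (cases "j \<le> n div 2")
    case False
    then have "n - j \<in> {1..n div 2}" "n - (n - j) = j" "n choose (n - j) = n choose j"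
      using that(1) by (auto simp: binomial_symmetric[symmetric])
    then show ?thesis using half closed_tetrablock_commute by metis
  qed (use that in auto)
  then show ?thesis unfolding pairwise_tetrablock_def by auto
qed

section \<open>Reduction to normalised pairs\<close>

lemma pair_conditions_iff:
  fixes y :: "nat \<Rightarrow> complex" and q :: complex
  assumes j: "j \<in> {1..n div 2}"
  defines "c \<equiv> real (n choose j)"
    and "T \<equiv> closed_tetrablock (y j / of_nat (n choose j)) (y (n - j) / of_nat (n choose j)) q"
  shows "(\<forall>z\<in>ball 0 1. \<forall>w\<in>ball 0 1. of_real c - y j * z - y (n - j) * w + of_real c * q * z * w \<noteq> 0)
      \<longleftrightarrow> T" (is ?cond2)
    and "Phi_Hinf n j y q \<le> 1 \<and> (y j * y (n - j) = of_real (c^2) * q \<longrightarrow> cmod (y (n - j)) \<le> c)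
      \<longleftrightarrow> T" (is ?cond3)
    and "Phi_Hinf n (n - j) y q \<le> 1 \<and> (y j * y (n - j) = of_real (c^2) * q \<longrightarrow> cmod (y j) \<le> c)
      \<longleftrightarrow> T" (is ?cond3_swap)
    and "c * cmod (y j - cnj (y (n - j)) * q) + cmod (y j * y (n - j) - of_real (c^2) * q)
        \<le> c^2 - cmod (y (n - j))^2 \<and> (y j * y (n - j) = of_real (c^2) * q \<longrightarrow> cmod (y j) \<le> c)
      \<longleftrightarrow> T" (is ?cond4)
    and "c * cmod (y (n - j) - cnj (y j) * q) + cmod (y j * y (n - j) - of_real (c^2) * q)
        \<le> c^2 - cmod (y j)^2 \<and> (y j * y (n - j) = of_real (c^2) * q \<longrightarrow> cmod (y (n - j)) \<le> c)
      \<longleftrightarrow> T" (is ?cond4_swap)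
    and "cmod (y j)^2 - cmod (y (n - j))^2 + c^2 * cmod q^2 + 2 * c * cmod (y (n - j) - cnj (y j) * q)
        \<le> c^2 \<and> cmod (y (n - j)) \<le> c
      \<longleftrightarrow> T" (is ?cond5)
    and "cmod (y (n - j))^2 - cmod (y j)^2 + c^2 * cmod q^2 + 2 * c * cmod (y j - cnj (y (n - j)) * q)
        \<le> c^2 \<and> cmod (y j) \<le> c
      \<longleftrightarrow> T" (is ?cond5_swap)
    and "cmod q \<le> 1 \<and> cmod (y j)^2 + cmod (y (n - j))^2 - c^2 * cmod q^2
        + 2 * cmod (y j * y (n - j) - of_real (c^2) * q) \<le> c^2
      \<longleftrightarrow> T" (is ?cond6)
    and "cmod (y (n - j) - cnj (y j) * q) + cmod (y j - cnj (y (n - j)) * q) \<le> c * (1 - cmod q^2) \<and>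
        (cmod q = 1 \<longrightarrow> cmod (y j) \<le> c)
      \<longleftrightarrow> T" (is ?cond7)
    and "(\<exists>B :: complex^2^2. onorm (\<lambda>x. B *v x) \<le> 1 \<and>
        y j = of_real c * B$1$1 \<and> y (n - j) = of_real c * B$2$2 \<and> det B = q)
      \<longleftrightarrow> T" (is ?cond8)
    and "(\<exists>B :: complex^2^2. onorm (\<lambda>x. B *v x) \<le> 1 \<and> transpose B = B \<and>
        y j = of_real c * B$1$1 \<and> y (n - j) = of_real c * B$2$2 \<and> det B = q)
      \<longleftrightarrow> T" (is ?cond9)
proof -
  have c: "0 < c" "n choose (n - j) = n choose j" "n - (n - j) = j"
    using j unfolding c_def by (auto simp: binomial_symmetric[symmetric])
  define a b where "a = y j / of_real c" and "b = y (n - j) / of_real c"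
  have y: "y j = of_real c * a" "y (n - j) = of_real c * b" using c unfolding a_def b_def by simp_all
  have T: "T \<longleftrightarrow> closed_tetrablock a b q" unfolding T_def a_def b_def c_def by simp
  note T' = T[unfolded closed_tetrablock_commute[of a]]
  show ?cond2 using scaled_cond2_iff[OF c(1) y] T by simp
  show ?cond3 using Phi_cond3_iff[of c n j y a b q] c(1) y T unfolding c_def by simp
  show ?cond3_swap using Phi_cond3_iff[of c n "n - j" y b a q] c y T' unfolding c_def by (simp add: mult.commute)
  show ?cond4 using scaled_cond4_iff[OF c(1) y] T by simp
  show ?cond4_swap using scaled_cond4_swap_iff[OF c(1) y] T by simp
  show ?cond5 using scaled_cond5_iff[OF c(1) y] T by simp
  show ?cond5_swap using scaled_cond5_iff[OF c(1) y(2,1)] T' by simp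
  show ?cond6 using scaled_cond6_iff[OF c(1) y] T by simp
  show ?cond7 using scaled_cond7_iff[OF c(1) y] T by simp
  show ?cond8 using scaled_cond8_iff[OF c(1) y] T by simp
  show ?cond9 using scaled_cond9_iff[OF c(1) y] T by simp
qed

lemma cond10_iff:
  assumes "2 \<le> n"
  shows "cmod q \<le> 1 \<and> (\<exists>\<beta>. \<forall>j\<in>{1..n div 2}.
      y j = \<beta> j + cnj (\<beta> (n - j)) * q \<and> y (n - j) = \<beta> (n - j) + cnj (\<beta> j) * q \<and>
      cmod (\<beta> j) + cmod (\<beta> (n - j)) \<le> real (n choose j))
    \<longleftrightarrow> (\<forall>j\<in>{1..n div 2}.
      closed_tetrablock (y j / of_nat (n choose j)) (y (n - j) / of_nat (n choose j)) q)"
    (is "_ \<and> (\<exists>\<beta>. \<forall>j\<in>?J. ?repr \<beta> j) \<longleftrightarrow> (\<forall>j\<in>?J. ?T j)")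
proof
  assume "cmod q \<le> 1 \<and> (\<exists>\<beta>. \<forall>j\<in>?J. ?repr \<beta> j)"
  then obtain \<beta> where q: "cmod q \<le> 1" and \<beta>: "\<forall>j\<in>?J. ?repr \<beta> j" by blast
  have "closed_tetrablock (y j / of_real (real (n choose j))) (y (n - j) / of_real (real (n choose j))) q"
    if "j \<in> ?J" for j
    using \<beta> that q by (intro scaled_beta_repr_imp_closed_tetrablock) auto
  then show "\<forall>j\<in>?J. ?T j" by simp
next
  assume T: "\<forall>j\<in>?J. ?T j"
  moreover have "1 \<in> ?J" using assms by simp
  ultimately have "?T 1" by blast
  then have "cmod q \<le> 1" unfolding closed_tetrablock_def by blast
  moreover have "\<forall>j\<in>?J. ?repr (pairwise_beta n y q) j"
    using T pairwise_beta_repr by auto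
  ultimately show "cmod q \<le> 1 \<and> (\<exists>\<beta>. \<forall>j\<in>?J. ?repr \<beta> j)" by blast
qed

lemma ex_family_iff:
  assumes "\<And>j. j \<in> J \<Longrightarrow> (\<exists>x. P j x) \<longleftrightarrow> Q j"
  shows "(\<forall>j\<in>J. Q j) \<longleftrightarrow> (\<exists>f. \<forall>j\<in>J. P j (f j))"
  using assms bchoice_iff[of J P] by blast

lemma ball_ball_ball_commute:
  "(\<forall>z\<in>A. \<forall>w\<in>B. \<forall>j\<in>J. P z w j) \<longleftrightarrow> (\<forall>j\<in>J. \<forall>z\<in>A. \<forall>w\<in>B. P z w j)"
  by blast

theorem mainTheorem3:
  fixes n :: nat and y :: "nat \<Rightarrow> complex" and q :: complex
  assumes "n \<ge> 2"
  defines "J \<equiv> {1..n div 2}"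
  shows
   "let c = (\<lambda>j. real (n choose j));
        P1 = ((y, q) \<in> Gammatilde n);
        P2 = (\<forall>z\<in>ball 0 1. \<forall>w\<in>ball 0 1. \<forall>j\<in>J.
                 of_real (c j) - y j * z - y (n - j) * w + of_real (c j) * q * z * w \<noteq> 0);
        P3 = (\<forall>j\<in>J. Phi_Hinf n j y q \<le> 1 \<and>
                 (y j * y (n - j) = of_real (c j ^ 2) * q \<longrightarrow> cmod (y (n - j)) \<le> c j));
        P3' = (\<forall>j\<in>J. Phi_Hinf n (n - j) y q \<le> 1 \<and>
                 (y j * y (n - j) = of_real (c j ^ 2) * q \<longrightarrow> cmod (y j) \<le> c j));
        P4 = (\<forall>j\<in>J. c j * cmod (y j - cnj (y (n - j)) * q)
                   + cmod (y j * y (n - j) - of_real (c j ^ 2) * q) \<le> c j ^ 2 - cmod (y (n - j)) ^ 2 \<and>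
                 (y j * y (n - j) = of_real (c j ^ 2) * q \<longrightarrow> cmod (y j) \<le> c j));
        P4' = (\<forall>j\<in>J. c j * cmod (y (n - j) - cnj (y j) * q)
                   + cmod (y j * y (n - j) - of_real (c j ^ 2) * q) \<le> c j ^ 2 - cmod (y j) ^ 2 \<and>
                 (y j * y (n - j) = of_real (c j ^ 2) * q \<longrightarrow> cmod (y (n - j)) \<le> c j));
        P5 = (\<forall>j\<in>J. cmod (y j) ^ 2 - cmod (y (n - j)) ^ 2 + c j ^ 2 * cmod q ^ 2
                   + 2 * c j * cmod (y (n - j) - cnj (y j) * q) \<le> c j ^ 2 \<and>
                 cmod (y (n - j)) \<le> c j);
        P5' = (\<forall>j\<in>J. cmod (y (n - j)) ^ 2 - cmod (y j) ^ 2 + c j ^ 2 * cmod q ^ 2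
                   + 2 * c j * cmod (y j - cnj (y (n - j)) * q) \<le> c j ^ 2 \<and>
                 cmod (y j) \<le> c j);
        P6 = (cmod q \<le> 1 \<and> (\<forall>j\<in>J. cmod (y j) ^ 2 + cmod (y (n - j)) ^ 2 - c j ^ 2 * cmod q ^ 2
                   + 2 * cmod (y j * y (n - j) - of_real (c j ^ 2) * q) \<le> c j ^ 2));
        P7 = ((\<forall>j\<in>J. cmod (y (n - j) - cnj (y j) * q) + cmod (y j - cnj (y (n - j)) * q)
                   \<le> c j * (1 - cmod q ^ 2)) \<and>
              (cmod q = 1 \<longrightarrow> (\<forall>j\<in>J. cmod (y j) \<le> c j)));
        P8 = (\<exists>B :: nat \<Rightarrow> complex^2^2. \<forall>j\<in>J. onorm (\<lambda>x. B j *v x) \<le> 1 \<and>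
                 y j = of_real (c j) * B j $ 1 $ 1 \<and> y (n - j) = of_real (c j) * B j $ 2 $ 2 \<and>
                 det (B j) = q);
        P9 = (\<exists>B :: nat \<Rightarrow> complex^2^2. \<forall>j\<in>J. onorm (\<lambda>x. B j *v x) \<le> 1 \<and>
                 transpose (B j) = B j \<and>
                 y j = of_real (c j) * B j $ 1 $ 1 \<and> y (n - j) = of_real (c j) * B j $ 2 $ 2 \<and>
                 det (B j) = q);
        P10 = (cmod q \<le> 1 \<and> (\<exists>\<beta> :: nat \<Rightarrow> complex. \<forall>j\<in>J.
                 y j = \<beta> j + cnj (\<beta> (n - j)) * q \<and> y (n - j) = \<beta> (n - j) + cnj (\<beta> j) * q \<and>
                 cmod (\<beta> j) + cmod (\<beta> (n - j)) \<le> c j))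
    in (P1 \<longleftrightarrow> P2) \<and> (P1 \<longleftrightarrow> P3) \<and> (P1 \<longleftrightarrow> P3') \<and> (P1 \<longleftrightarrow> P4) \<and> (P1 \<longleftrightarrow> P4')
       \<and> (P1 \<longleftrightarrow> P5) \<and> (P1 \<longleftrightarrow> P5') \<and> (P1 \<longleftrightarrow> P6) \<and> (P1 \<longleftrightarrow> P7) \<and> (P1 \<longleftrightarrow> P8)
       \<and> (P1 \<longleftrightarrow> P9) \<and> (P1 \<longleftrightarrow> P10)"
proof -
  note pair = pair_conditions_iff[where n = n and y = y and q = q, folded J_def]
  have "1 \<in> J" using assms(1) unfolding J_def by simp
  show ?thesis
    unfolding Let_def Gammatilde_eq_pairwise_tetrablock[OF assms(1)] mem_pairwise_tetrablock_iff
      J_def[symmetric] ball_ball_ball_commute[of "ball 0 1" "ball 0 1" J]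
      cond10_iff[OF assms(1), folded J_def]
    \<comment> \<open>(1) and (10) now coincide; (2)--(5') are conjunctions over \<open>J\<close> of \<open>pair_conditions_iff\<close>,
      (6) and (7) have a part independent of \<open>j\<close>, and (8), (9) need a choice of the \<open>B j\<close>.\<close>
    apply (intro conjI ball_cong refl)
    apply (erule pair[symmetric])+
    subgoal using pair(8) \<open>1 \<in> J\<close> by blast
    subgoal using pair(9) by blast
    subgoal
      by (rule ex_family_iff[where P = "\<lambda>j B. onorm (\<lambda>x. B *v x) \<le> 1 \<and>
          y j = of_real (real (n choose j)) * B$1$1 \<and> y (n - j) = of_real (real (n choose j)) * B$2$2 \<and>
          det B = q"]) (erule pair(10))
    subgoal
      by (rule ex_family_iff[where P = "\<lambda>j B. onorm (\<lambda>x. B *v x) \<le> 1 \<and> transpose B = B \<and>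
          y j = of_real (real (n choose j)) * B$1$1 \<and> y (n - j) = of_real (real (n choose j)) * B$2$2 \<and>
          det B = q"]) (erule pair(11))
    done
qed

end
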